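(* Let $\mathcal T$ be an atomic orbital category. The restricted map $\nabla_u:\mathrm{wIndSys}^{uni}_{\mathcal T}\to\mathrm{Fam}_{\mathcal T}$ has a fully faithful left adjoint given by $\mathcal F\mapsto\underline{\mathbb F}^0_{\mathcal T}\cup E^{\mathcal T}_{\mathcal F}\underline{\mathbb F}^\infty_{\mathcal F}$ and a fully faithful right adjoint; hence it is a cocartesian fibration, with cocartesian transport along $\mathcal F\le\mathcal F'$ given by $\mathcal C\mapsto\mathcal C\vee E^{\mathcal T}_{\mathcal F'}\underline{\mathbb F}^\infty_{\mathcal F'}$.
   Context: For a small category $\mathcal T$, $\mathbb F_{\mathcal T}$ is the full subcategory of $\mathrm{Fun}(\mathcal T^{op},\mathrm{Set})$ on finite coproducts of representables; $\mathcal T$ is orbital if $\mathbb F_{\mathcal T}$ has pullbacks, and atomic if every morphism of $\mathcal T$ admitting a section is an isomorphism. $\mathbb F_V:=\mathbb F_{\mathcal T,/V}$, $*_V$ terminal, $\emptyset_V$ initial, $n\cdot S$ the $n$-fold coproduct; for $U\to V$, $\mathrm{Res}^V_U$ is pullback and $\mathrm{Ind}^V_U$ postcomposition. A full $\mathcal T$-subcategory assigns isomorphism-closed classes $\mathcal C_V\subseteq\mathrm{Ob}\,\mathbb F_V$ stable under restriction. For $S\in\mathbb F_V$ with orbits $U$ and $T_U\in\mathbb F_U$, $\coprod_U^ST_U:=\coprod_U\mathrm{Ind}_U^VT_U$. A $\mathcal T$-weak indexing system is a full $\mathcal T$-subcategory with $\mathcal C_V\neq\emptyset\Rightarrow *_V\in\mathcal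 C_V$ and closed under $\coprod^S_UT_U$ for $S\in\mathcal C_V$, $T_U\in\mathcal C_U$; these form a lattice under inclusion (join $\vee$). It is unital if every $\mathcal C_V$ is nonempty and $S\sqcup S'\in\mathcal C_V\Rightarrow S,S'\in\mathcal C_V$; $\mathrm{wIndSys}^{uni}_{\mathcal T}$ is the poset of these. A $\mathcal T$-family is a full subcategory $\mathcal F$ with $V\to W$, $W\in\mathcal F\Rightarrow V\in\mathcal F$; $\mathrm{Fam}_{\mathcal T}$ their poset. $\nabla_u(\mathcal C)=\{V\mid 2\cdot *_V\in\mathcal C_V\}$. $\underline{\mathbb F}^0_{\mathcal T}$ has $V$-values $\{\emptyset_V,*_V\}$; $E^{\mathcal T}_{\mathcal F}\underline{\mathbb F}^\infty_{\mathcal F}$ has $V$-values $\{n\cdot *_V\mid n\in\mathbb N\}$ for $V\in\mathcal F$ and $\emptyset$ otherwise. Adjoints of monotone maps: $L\dashv\pi$ iff $L(x)\le y\iff x\le\pi(y)$; fully faithful means order-reflecting. A monotone $\pi:P\to Q$ is a cocartesian fibration if for all $q\le q'$ and $x\in\pi^{-1}(q)$ there is $t_q^{q'}x\in\pi^{-1}(q')$ with: for all $y$ with $q'\le\pi(y)$, $x\le y\iff t_q^{q'}x\le y$ ($t_q^{q'}$ is cocartesian transport). *)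

theory Defs
  imports Main
begin

record ('o, 'm) cat =
  Obj :: "'o set"
  Arr :: "'m set"
  Dom :: "'m \<Rightarrow> 'o"
  Cod :: "'m \<Rightarrow> 'o"
  Idt :: "'o \<Rightarrow> 'm"
  Comp :: "'m \<Rightarrow> 'm \<Rightarrow> 'm"   (* Comp C g f = g o f *)

definition is_category :: "('o, 'm) cat \<Rightarrow> bool" where
  "is_category C \<longleftrightarrow>
     (\<forall>V\<in>Obj C. Idt C V \<in> Arr C \<and> Dom C (Idt C V) = V \<and> Cod C (Idt C V) = V) \<and>
     (\<forall>f\<in>Arr C. Dom C f \<in> Obj C \<and> Cod C f \<in> Obj C) \<and>
     (\<forall>f\<in>Arr C. \<forall>g\<in>Arr C. Dom C g = Cod C f \<longrightarrow>
        Comp C g f \<in> Arr C \<and> Dom C (Comp C g f) = Dom C f \<and> Cod C (Comp C g f) = Cod C g) \<and>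
     (\<forall>f\<in>Arr C. Comp C (Idt C (Cod C f)) f = f \<and> Comp C f (Idt C (Dom C f)) = f) \<and>
     (\<forall>f\<in>Arr C. \<forall>g\<in>Arr C. \<forall>h\<in>Arr C. Dom C g = Cod C f \<longrightarrow> Dom C h = Cod C g \<longrightarrow>
        Comp C h (Comp C g f) = Comp C (Comp C h g) f)"

definition is_iso_arr :: "('o, 'm) cat \<Rightarrow> 'm \<Rightarrow> bool" where
  "is_iso_arr C f \<longleftrightarrow> f \<in> Arr C \<and>
     (\<exists>g\<in>Arr C. Dom C g = Cod C f \<and> Cod C g = Dom C f \<and>
        Comp C g f = Idt C (Dom C f) \<and> Comp C f g = Idt C (Cod C f))"

definition atomic :: "('o, 'm) cat \<Rightarrow> bool" where
  "atomic C \<longleftrightarrow> (\<forall>f\<in>Arr C. (\<exists>s\<in>Arr C. Dom C s = Cod C f \<and> Cod C s = Dom C f \<and>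
                         Comp C f s = Idt C (Cod C f)) \<longrightarrow> is_iso_arr C f)"

text \<open>By the Yoneda lemma (representables are connected), the full subcategory of presheaves
  on finite coproducts of representables is modelled as follows: an object is a finite list
  of objects of T (the summands), and a morphism from xs to ys is a list assigning to each
  summand i of xs a summand j of ys together with a morphism xs!i -> ys!j of T.\<close>

definition fobj :: "('o, 'm) cat \<Rightarrow> 'o list \<Rightarrow> bool" where
  "fobj C xs \<longleftrightarrow> set xs \<subseteq> Obj C"

definition fmor :: "('o, 'm) cat \<Rightarrow> 'o list \<Rightarrow> 'o list \<Rightarrow> (nat \<times> 'm) list \<Rightarrow> bool" where
  "fmor C xs ys h \<longleftrightarrow> length h = length xs \<and>
     (\<forall>i<length xs. fst (h!i) < length ys \<and> snd (h!i) \<in> Arr C \<and>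
        Dom C (snd (h!i)) = xs!i \<and> Cod C (snd (h!i)) = ys!(fst (h!i)))"

text \<open>Composition: fcomp C k h = k o h.\<close>
definition fcomp :: "('o, 'm) cat \<Rightarrow> (nat \<times> 'm) list \<Rightarrow> (nat \<times> 'm) list \<Rightarrow> (nat \<times> 'm) list" where
  "fcomp C k h = map (\<lambda>(j, m). (fst (k!j), Comp C (snd (k!j)) m)) h"

definition is_pullback :: "('o, 'm) cat \<Rightarrow> 'o list \<Rightarrow> 'o list \<Rightarrow> 'o list \<Rightarrow>
    (nat \<times> 'm) list \<Rightarrow> (nat \<times> 'm) list \<Rightarrow> 'o list \<Rightarrow> (nat \<times> 'm) list \<Rightarrow> (nat \<times> 'm) list \<Rightarrow> bool" where
  "is_pullback C X Y Z f g P p1 p2 \<longleftrightarrow>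
     fobj C X \<and> fobj C Y \<and> fobj C Z \<and> fobj C P \<and>
     fmor C X Z f \<and> fmor C Y Z g \<and> fmor C P X p1 \<and> fmor C P Y p2 \<and>
     fcomp C f p1 = fcomp C g p2 \<and>
     (\<forall>Q q1 q2. fobj C Q \<and> fmor C Q X q1 \<and> fmor C Q Y q2 \<and> fcomp C f q1 = fcomp C g q2 \<longrightarrow>
        (\<exists>!u. fmor C Q P u \<and> fcomp C p1 u = q1 \<and> fcomp C p2 u = q2))"

definition orbital :: "('o, 'm) cat \<Rightarrow> bool" where
  "orbital C \<longleftrightarrow> (\<forall>X Y Z f g. fobj C X \<and> fobj C Y \<and> fobj C Z \<and> fmor C X Z f \<and> fmor C Y Z g \<longrightarrow>
      (\<exists>P p1 p2. is_pullback C X Y Z f g P p1 p2))"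

text \<open>An object of F_V = F_{T,/V} is a finite coproduct of representables with a map to V,
  i.e. a list of arrows of T with codomain V (one per orbit).\<close>

definition fVobj :: "('o, 'm) cat \<Rightarrow> 'o \<Rightarrow> 'm list \<Rightarrow> bool" where
  "fVobj C V S \<longleftrightarrow> V \<in> Obj C \<and> (\<forall>s\<in>set S. s \<in> Arr C \<and> Cod C s = V)"

definition fund :: "('o, 'm) cat \<Rightarrow> 'm list \<Rightarrow> 'o list" where
  "fund C S = map (Dom C) S"

definition fstr :: "'m list \<Rightarrow> (nat \<times> 'm) list" where
  "fstr S = map (\<lambda>s. (0, s)) S"

definition fV_iso :: "('o, 'm) cat \<Rightarrow> 'm list \<Rightarrow> 'm list \<Rightarrow> bool" where
  "fV_iso C S S' \<longleftrightarrow> (\<exists>\<sigma> \<phi>. bij_betw \<sigma> {..<length S} {..<length S'} \<and>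
     (\<forall>i<length S. is_iso_arr C (\<phi> i) \<and> Dom C (\<phi> i) = Dom C (S!i) \<and>
        Cod C (\<phi> i) = Dom C (S'!(\<sigma> i)) \<and> Comp C (S'!(\<sigma> i)) (\<phi> i) = S!i))"

definition is_restriction :: "('o, 'm) cat \<Rightarrow> 'm \<Rightarrow> 'm list \<Rightarrow> 'm list \<Rightarrow> bool" where
  "is_restriction C g S P \<longleftrightarrow> (\<exists>q. is_pullback C (fund C S) [Dom C g] [Cod C g]
      (fstr S) [(0, g)] (fund C P) q (fstr P))"

text \<open>Induction Ind^V_U along an orbit s : U -> V (postcomposition), and the
  coproduct over orbits of S of Ind T_U.\<close>
definition find :: "('o, 'm) cat \<Rightarrow> 'm \<Rightarrow> 'm list \<Rightarrow> 'm list" where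
  "find C s T = map (Comp C s) T"

definition fcoprod :: "('o, 'm) cat \<Rightarrow> 'm list \<Rightarrow> 'm list list \<Rightarrow> 'm list" where
  "fcoprod C S Ts = concat (map (\<lambda>(s, T). find C s T) (zip S Ts))"

type_synonym ('o, 'm) tsubcat = "'o \<Rightarrow> 'm list set"

definition full_tsubcat :: "('o, 'm) cat \<Rightarrow> ('o, 'm) tsubcat \<Rightarrow> bool" where
  "full_tsubcat C \<C> \<longleftrightarrow>
     (\<forall>V. V \<notin> Obj C \<longrightarrow> \<C> V = {}) \<and>
     (\<forall>V\<in>Obj C. \<forall>S\<in>\<C> V. fVobj C V S) \<and>
     (\<forall>V\<in>Obj C. \<forall>S\<in>\<C> V. \<forall>S'. fVobj C V S' \<and> fV_iso C S S' \<longrightarrow> S' \<in> \<C> V) \<and>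
     (\<forall>g\<in>Arr C. \<forall>S\<in>\<C> (Cod C g). \<forall>P. fVobj C (Dom C g) P \<and> is_restriction C g S P
        \<longrightarrow> P \<in> \<C> (Dom C g))"

definition wIndSys :: "('o, 'm) cat \<Rightarrow> ('o, 'm) tsubcat \<Rightarrow> bool" where
  "wIndSys C \<C> \<longleftrightarrow> full_tsubcat C \<C> \<and>
     (\<forall>V\<in>Obj C. \<C> V \<noteq> {} \<longrightarrow> [Idt C V] \<in> \<C> V) \<and>
     (\<forall>V\<in>Obj C. \<forall>S\<in>\<C> V. \<forall>Ts. length Ts = length S \<and>
        (\<forall>i<length S. Ts!i \<in> \<C> (Dom C (S!i))) \<longrightarrow> fcoprod C S Ts \<in> \<C> V)"

definition uni_wIndSys :: "('o, 'm) cat \<Rightarrow> ('o, 'm) tsubcat \<Rightarrow> bool" where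
  "uni_wIndSys C \<C> \<longleftrightarrow> wIndSys C \<C> \<and>
     (\<forall>V\<in>Obj C. \<C> V \<noteq> {}) \<and>
     (\<forall>V\<in>Obj C. \<forall>S S'. S @ S' \<in> \<C> V \<longrightarrow> S \<in> \<C> V \<and> S' \<in> \<C> V)"

definition wjoin :: "('o, 'm) cat \<Rightarrow> ('o, 'm) tsubcat \<Rightarrow> ('o, 'm) tsubcat \<Rightarrow> ('o, 'm) tsubcat" where
  "wjoin C \<C> \<D> = (\<lambda>V. \<Inter>{\<E> V | \<E>. wIndSys C \<E> \<and> \<C> \<le> \<E> \<and> \<D> \<le> \<E>})"

definition is_family :: "('o, 'm) cat \<Rightarrow> 'o set \<Rightarrow> bool" where
  "is_family C \<F> \<longleftrightarrow> \<F> \<subseteq> Obj C \<and>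
     (\<forall>f\<in>Arr C. Cod C f \<in> \<F> \<longrightarrow> Dom C f \<in> \<F>)"

definition nabla_u :: "('o, 'm) cat \<Rightarrow> ('o, 'm) tsubcat \<Rightarrow> 'o set" where
  "nabla_u C \<C> = {V \<in> Obj C. replicate 2 (Idt C V) \<in> \<C> V}"

definition F0 :: "('o, 'm) cat \<Rightarrow> ('o, 'm) tsubcat" where
  "F0 C = (\<lambda>V. if V \<in> Obj C then {S. fVobj C V S \<and> (fV_iso C S [] \<or> fV_iso C S [Idt C V])} else {})"

definition EFinf :: "('o, 'm) cat \<Rightarrow> 'o set \<Rightarrow> ('o, 'm) tsubcat" where
  "EFinf C \<F> = (\<lambda>V. if V \<in> \<F> \<and> V \<in> Obj C then
      {S. fVobj C V S \<and> (\<exists>n. fV_iso C S (replicate n (Idt C V)))} else {})"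

end

theory Submission
  imports Defs
begin

text \<open>In an atomic orbital category the restriction of \<open>n \<cdot> *\<^sub>V\<close> along any \<open>U \<rightarrow> V\<close> is
  \<open>n \<cdot> *\<^sub>U\<close>, since pullbacks of isomorphisms are isomorphisms. Hence \<open>\<nabla>\<^sub>u C\<close> is a family, and
  \<open>\<F> \<mapsto> \<F>\<^sup>0 \<union> E\<^sub>\<F> \<F>\<^sup>\<infinity>\<close>, whose members are the lists of isomorphisms of length at most one
  away from \<open>\<F>\<close>, is the least unital weak indexing system with \<open>\<F> \<subseteq> \<nabla>\<^sub>u\<close>.

  The right adjoint sends \<open>\<F>\<close> to all \<open>S\<close> such that a map \<open>g : U \<rightarrow> V\<close> with two different lifts
  through the orbits of \<open>S\<close> has \<open>U \<in> \<F>\<close>: two different lifts of \<open>g\<close> give two different orbits of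
  \<open>Res\<^sub>g S\<close> admitting a section, which are isomorphisms by atomicity, so that \<open>2 \<cdot> *\<^sub>U \<in> C\<^sub>U\<close>.
  Both adjoints are fully faithful because \<open>\<nabla>\<^sub>u\<close> recovers \<open>\<F>\<close> from them.

  For the cocartesian transport, \<open>C \<or> E\<^sub>\<F>\<^sub>' \<F>\<^sup>\<infinity>\<^sub>\<F>\<^sub>'\<close> is described orbitwise. The description is
  closed under isomorphisms, coproducts and (by pasting pullbacks) restrictions, contains \<open>C\<close> and
  \<open>E\<^sub>\<F>\<^sub>'\<close>, and lies in every weak indexing system containing both; it lies below the right adjoint
  of \<open>\<F>'\<close>, hence its \<open>\<nabla>\<^sub>u\<close> is exactly \<open>\<F>'\<close>.\<close>

section \<open>Categories and the slices \<open>\<F>\<^sub>V\<close>\<close>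

locale category =
  fixes T :: "('o, 'm) cat"
  assumes is_category: "is_category T"
begin

definition hom :: "'m \<Rightarrow> 'o \<Rightarrow> 'o \<Rightarrow> bool" where
  "hom f A B \<longleftrightarrow> f \<in> Arr T \<and> Dom T f = A \<and> Cod T f = B"

lemma homI [intro]: "f \<in> Arr T \<Longrightarrow> hom f (Dom T f) (Cod T f)"
  by (simp add: hom_def)

lemma arr_obj: "f \<in> Arr T \<Longrightarrow> Dom T f \<in> Obj T" "f \<in> Arr T \<Longrightarrow> Cod T f \<in> Obj T"
  using is_category unfolding is_category_def by auto

lemma hom_obj: "hom f A B \<Longrightarrow> A \<in> Obj T" "hom f A B \<Longrightarrow> B \<in> Obj T"
  using arr_obj by (auto simp: hom_def)

lemma comp_hom [intro]: "hom f A B \<Longrightarrow> hom g B C \<Longrightarrow> hom (Comp T g f) A C"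
  using is_category unfolding is_category_def hom_def by auto

lemma id_hom [intro]: "A \<in> Obj T \<Longrightarrow> hom (Idt T A) A A"
  using is_category unfolding is_category_def hom_def by auto

lemma dom_id [simp]: "A \<in> Obj T \<Longrightarrow> Dom T (Idt T A) = A"
  and cod_id [simp]: "A \<in> Obj T \<Longrightarrow> Cod T (Idt T A) = A"
  using id_hom by (auto simp: hom_def)

lemma id_left [simp]: "hom f A B \<Longrightarrow> Comp T (Idt T B) f = f"
  using is_category unfolding is_category_def hom_def by auto

lemma id_right [simp]: "hom f A B \<Longrightarrow> Comp T f (Idt T A) = f"
  using is_category unfolding is_category_def hom_def by auto

lemma assoc: "hom f A B \<Longrightarrow> hom g B C \<Longrightarrow> hom h C D \<Longrightarrow>
    Comp T h (Comp T g f) = Comp T (Comp T h g) f"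
  using is_category unfolding is_category_def hom_def by metis

abbreviation iso :: "'m \<Rightarrow> bool" where
  "iso \<equiv> is_iso_arr T"

definition inv :: "'m \<Rightarrow> 'm" where
  "inv f = (SOME g. g \<in> Arr T \<and> Dom T g = Cod T f \<and> Cod T g = Dom T f \<and>
        Comp T g f = Idt T (Dom T f) \<and> Comp T f g = Idt T (Cod T f))"

lemma
  assumes "iso f"
  shows inv_hom: "hom (inv f) (Cod T f) (Dom T f)"
    and inv_comp: "Comp T (inv f) f = Idt T (Dom T f)"
    and comp_inv: "Comp T f (inv f) = Idt T (Cod T f)"
proof -
  have "\<exists>g. g \<in> Arr T \<and> Dom T g = Cod T f \<and> Cod T g = Dom T f \<and>
        Comp T g f = Idt T (Dom T f) \<and> Comp T f g = Idt T (Cod T f)"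
    using assms unfolding is_iso_arr_def by blast
  from someI_ex[OF this] show "hom (inv f) (Cod T f) (Dom T f)"
    "Comp T (inv f) f = Idt T (Dom T f)" "Comp T f (inv f) = Idt T (Cod T f)"
    unfolding inv_def hom_def by auto
qed

lemma iso_arr: "iso f \<Longrightarrow> f \<in> Arr T"
  by (simp add: is_iso_arr_def)

lemma isoI: "hom f A B \<Longrightarrow> hom g B A \<Longrightarrow> Comp T g f = Idt T A \<Longrightarrow> Comp T f g = Idt T B \<Longrightarrow> iso f"
  unfolding is_iso_arr_def hom_def by auto

lemma inv_iso: "iso f \<Longrightarrow> iso (inv f)"
  using inv_hom[of f] inv_comp[of f] comp_inv[of f] iso_arr[of f]
  by (intro isoI[of "inv f" "Cod T f" "Dom T f" f]) (auto simp: hom_def)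

lemma id_iso: "A \<in> Obj T \<Longrightarrow> iso (Idt T A)"
  using id_left[OF id_hom[of A]] by (intro isoI[of _ A A "Idt T A"]) auto

lemma comp_iso:
  assumes f: "iso f" and g: "iso g" and "Dom T g = Cod T f"
  shows "iso (Comp T g f)"
proof -
  let ?A = "Dom T f" and ?B = "Cod T f" and ?C = "Cod T g"
  have hf: "hom f ?A ?B" and hg: "hom g ?B ?C" using assms iso_arr by (auto simp: hom_def)
  have hfi: "hom (inv f) ?B ?A" using inv_hom[OF f] .
  have hgi: "hom (inv g) ?C ?B" using inv_hom[OF g] assms by simp
  have "Comp T (Comp T (inv f) (inv g)) (Comp T g f) = Comp T (inv f) (Comp T (Comp T (inv g) g) f)"
    using assoc hf hg hgi hfi by (metis comp_hom)
  also have "\<dots> = Idt T ?A" using inv_comp[OF g] inv_comp[OF f] assms hf by simp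
  finally have left: "Comp T (Comp T (inv f) (inv g)) (Comp T g f) = Idt T ?A" .
  have "Comp T (Comp T g f) (Comp T (inv f) (inv g)) = Comp T g (Comp T (Comp T f (inv f)) (inv g))"
    using assoc hf hg hgi hfi by (metis comp_hom)
  also have "\<dots> = Idt T ?C" using comp_inv[OF f] comp_inv[OF g] hgi by simp
  finally have right: "Comp T (Comp T g f) (Comp T (inv f) (inv g)) = Idt T ?C" .
  show ?thesis
    using left right hf hg hfi hgi by (intro isoI[of _ ?A ?C "Comp T (inv f) (inv g)"]) auto
qed

lemma iso_cancel_left:
  assumes "iso e" "hom x C (Dom T e)" "hom y C (Dom T e)" "Comp T e x = Comp T e y"
  shows "x = y"
proof -
  have he: "hom e (Dom T e) (Cod T e)" using assms iso_arr by auto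
  have hi: "hom (inv e) (Cod T e) (Dom T e)" using inv_hom assms by auto
  have "x = Comp T (inv e) (Comp T e x)"
    using assoc[OF assms(2) he hi] inv_comp[OF assms(1)] assms(2) by simp
  also have "\<dots> = y" using assoc[OF assms(3) he hi] inv_comp[OF assms(1)] assms by simp
  finally show ?thesis .
qed

lemma section_eq_inv:
  assumes "iso f" "hom c (Cod T f) (Dom T f)" "Comp T f c = Idt T (Cod T f)"
  shows "c = inv f"
  using iso_cancel_left[OF assms(1) assms(2), of "inv f"] inv_hom[OF assms(1)] comp_inv[OF assms(1)]
    assms by simp

end

context category
begin

lemma fVobj_hom: "fVobj T V S \<Longrightarrow> k < length S \<Longrightarrow> hom (S!k) (Dom T (S!k)) V"
  unfolding fVobj_def hom_def by auto

lemma fVobj_obj: "fVobj T V S \<Longrightarrow> V \<in> Obj T"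
  unfolding fVobj_def by auto

lemma fVobj_append: "fVobj T V (S @ S') \<longleftrightarrow> fVobj T V S \<and> fVobj T V S' \<and> V \<in> Obj T"
  unfolding fVobj_def by auto

lemma fVobj_replicate_id: "V \<in> Obj T \<Longrightarrow> fVobj T V (replicate n (Idt T V))"
  using id_hom unfolding fVobj_def hom_def by auto

lemma fV_iso_length: "fV_iso T S S' \<Longrightarrow> length S = length S'"
  unfolding fV_iso_def using bij_betw_same_card by fastforce

lemma fV_iso_replicate_id_iff:
  assumes S: "fVobj T V S"
  shows "fV_iso T S (replicate n (Idt T V)) \<longleftrightarrow> length S = n \<and> (\<forall>s\<in>set S. iso s)"
proof
  assume a: "fV_iso T S (replicate n (Idt T V))"
  obtain \<sigma> \<phi> where \<sigma>: "bij_betw \<sigma> {..<length S} {..<n}" and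
    \<phi>: "\<forall>i<length S. iso (\<phi> i) \<and> Dom T (\<phi> i) = Dom T (S!i) \<and>
        Cod T (\<phi> i) = Dom T (replicate n (Idt T V) ! \<sigma> i) \<and>
        Comp T (replicate n (Idt T V) ! \<sigma> i) (\<phi> i) = S!i"
    using a unfolding fV_iso_def by auto
  have V: "V \<in> Obj T" using fVobj_obj[OF S] .
  have "S!i = \<phi> i" if i: "i < length S" for i
  proof -
    have "\<sigma> i < n" using \<sigma> i unfolding bij_betw_def by auto
    then show ?thesis using \<phi> i V iso_arr[of "\<phi> i"] id_left[of "\<phi> i" "Dom T (\<phi> i)" V]
      by (auto simp: hom_def)
  qed
  then show "length S = n \<and> (\<forall>s\<in>set S. iso s)"
    using a fV_iso_length \<phi> by (auto simp: in_set_conv_nth)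
next
  assume a: "length S = n \<and> (\<forall>s\<in>set S. iso s)"
  show "fV_iso T S (replicate n (Idt T V))"
    unfolding fV_iso_def
  proof (intro exI[of _ id] exI[of _ "nth S"] conjI allI impI)
    fix i assume i: "i < length S"
    show "Comp T (replicate n (Idt T V) ! id i) (S!i) = S!i" using a i fVobj_hom[OF S i] by simp
  qed (use a fVobj_hom[OF S] fVobj_obj[OF S] in \<open>auto simp: hom_def\<close>)
qed

lemma fV_iso_replicate_id:
  assumes S: "fVobj T V S" and isos: "\<forall>s\<in>set S. iso s"
  shows "fV_iso T (replicate (length S) (Idt T V)) S"
  unfolding fV_iso_def
proof (intro exI[of _ id] exI[of _ "\<lambda>i. inv (S!i)"] conjI allI impI)
  fix i assume "i < length (replicate (length S) (Idt T V))"
  then have i: "i < length S" by simp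
  have h: "hom (S!i) (Dom T (S!i)) V" using fVobj_hom[OF S i] .
  have iso: "iso (S!i)" using isos i by auto
  show "iso (inv (S!i))" using inv_iso[OF iso] .
  show "Dom T (inv (S!i)) = Dom T (replicate (length S) (Idt T V) ! i)"
    using inv_hom[OF iso] h i fVobj_obj[OF S] by (auto simp: hom_def)
  show "Cod T (inv (S!i)) = Dom T (S ! id i)"
    using inv_hom[OF iso] by (auto simp: hom_def)
  show "Comp T (S ! id i) (inv (S!i)) = replicate (length S) (Idt T V) ! i"
    using comp_inv[OF iso] h i by (auto simp: hom_def)
qed simp

lemma fV_iso_isos:
  assumes S': "fVobj T V S'" and iso: "fV_iso T S S'" and isos: "\<forall>s\<in>set S. iso s"
  shows "\<forall>s\<in>set S'. iso s"
proof -
  obtain \<sigma> \<phi> where \<sigma>: "bij_betw \<sigma> {..<length S} {..<length S'}" and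
    \<phi>: "\<forall>i<length S. iso (\<phi> i) \<and> Dom T (\<phi> i) = Dom T (S!i) \<and>
        Cod T (\<phi> i) = Dom T (S'!(\<sigma> i)) \<and> Comp T (S'!(\<sigma> i)) (\<phi> i) = S!i"
    using iso unfolding fV_iso_def by auto
  have "iso (S'!j)" if j: "j < length S'" for j
  proof -
    have "j \<in> \<sigma> ` {..<length S}" using \<sigma> j unfolding bij_betw_def by auto
    then obtain i where i: "i < length S" "\<sigma> i = j" by auto
    have ip: "iso (\<phi> i)" using \<phi> i by auto
    have hp: "hom (\<phi> i) (Dom T (\<phi> i)) (Cod T (\<phi> i))" using iso_arr[OF ip] by auto
    have hs: "hom (S'!j) (Cod T (\<phi> i)) V" using fVobj_hom[OF S' j] \<phi> i by auto
    have "S'!j = Comp T (S!i) (inv (\<phi> i))"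
      using assoc[OF inv_hom[OF ip] hp hs] comp_inv[OF ip] \<phi> i hs by auto
    then show ?thesis
      using comp_iso[OF inv_iso[OF ip], of "S!i"] inv_hom[OF ip] isos \<phi> i by (auto simp: hom_def)
  qed
  then show ?thesis by (auto simp: in_set_conv_nth)
qed

lemma fV_iso_singleton_comp_iso:
  assumes x: "hom x A B" and e: "iso e" "Cod T e = A"
  shows "fV_iso T [x] [Comp T x e]"
  unfolding fV_iso_def
proof (intro exI[of _ id] exI[of _ "\<lambda>i. inv e"] conjI allI impI)
  fix i assume "i < length [x]"
  then have i: "i = 0" by simp
  have he: "hom e (Dom T e) A" using iso_arr[OF e(1)] e(2) by auto
  have hi: "hom (inv e) A (Dom T e)" using inv_hom[OF e(1)] e(2) by simp
  show "iso (inv e)" using inv_iso[OF e(1)] .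
  show "Dom T (inv e) = Dom T ([x] ! i)" using hi x i by (auto simp: hom_def)
  show "Cod T (inv e) = Dom T ([Comp T x e] ! id i)" using hi comp_hom[OF he x] i by (auto simp: hom_def)
  show "Comp T ([Comp T x e] ! id i) (inv e) = [x] ! i"
    using assoc[OF hi he x] comp_inv[OF e(1)] e x i by simp
qed simp

lemma fV_iso_permute:
  assumes S: "fVobj T V S" and L: "distinct L" "set L = {..<length S}"
  shows "fV_iso T (map (nth S) L) S"
  unfolding fV_iso_def
proof (intro exI[of _ "nth L"] exI[of _ "\<lambda>i. Idt T (Dom T (S!(L!i)))"] conjI allI impI)
  show "bij_betw (nth L) {..<length (map (nth S) L)} {..<length S}"
    using bij_betw_nth[OF L(1)] L(2) by simp
  fix i assume i: "i < length (map (nth S) L)"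
  then have "L!i < length S" using L(2) nth_mem by fastforce
  then have h: "hom (S!(L!i)) (Dom T (S!(L!i))) V" using fVobj_hom[OF S] by blast
  then show "iso (Idt T (Dom T (S!(L!i))))"
    and "Dom T (Idt T (Dom T (S!(L!i)))) = Dom T (map (nth S) L ! i)"
    and "Cod T (Idt T (Dom T (S!(L!i)))) = Dom T (S ! (L!i))"
    and "Comp T (S!(L!i)) (Idt T (Dom T (S!(L!i)))) = map (nth S) L ! i"
    using id_iso[OF hom_obj(1)[OF h]] dom_id[OF hom_obj(1)[OF h]] cod_id[OF hom_obj(1)[OF h]] h i
    by auto
qed

end

section \<open>Restriction\<close>

lemma fcomp_nth:
  "k < length h \<Longrightarrow> fcomp C f h ! k = (fst (f ! fst (h!k)), Comp C (snd (f ! fst (h!k))) (snd (h!k)))"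
  by (simp add: fcomp_def split_beta)

lemma fcomp_singleton: "fcomp C f [(j, m)] = [(fst (f!j), Comp C (snd (f!j)) m)]"
  by (simp add: fcomp_def)

lemma fstr_nth [simp]: "k < length S \<Longrightarrow> fstr S ! k = (0, S!k)"
  and fund_nth [simp]: "k < length S \<Longrightarrow> fund C S ! k = Dom C (S!k)"
  and length_fstr [simp]: "length (fstr S) = length S"
  and length_fund [simp]: "length (fund C S) = length S"
  by (simp_all add: fstr_def fund_def)

text \<open>The pullback square defining \<open>Res\<^sup>V\<^sub>U S\<close> along \<open>g : U \<rightarrow> V\<close>, read orbitwise: \<open>q\<close> sends
  each orbit of \<open>P\<close> to an orbit of \<open>S\<close>, and maps from a representable \<open>A\<close> into \<open>P\<close> correspond
  bijectively to pairs of maps from \<open>A\<close> into an orbit of \<open>S\<close> and into \<open>U\<close> that agree in \<open>V\<close>.\<close>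

locale restriction_data = category T for T :: "('o, 'm) cat" +
  fixes g :: 'm and S P :: "'m list" and q :: "(nat \<times> 'm) list"
  assumes arr: "g \<in> Arr T"
    and base: "fVobj T (Cod T g) S"
    and restr: "fVobj T (Dom T g) P"
    and cone: "k < length P \<Longrightarrow> fst (q!k) < length S \<and>
      hom (snd (q!k)) (Dom T (P!k)) (Dom T (S!fst (q!k))) \<and>
      Comp T (S!fst (q!k)) (snd (q!k)) = Comp T g (P!k)"
    and factor: "A \<in> Obj T \<Longrightarrow> i < length S \<Longrightarrow> hom x A (Dom T (S!i)) \<Longrightarrow> hom y A (Dom T g) \<Longrightarrow>
      Comp T (S!i) x = Comp T g y \<Longrightarrow>
      \<exists>k c. k < length P \<and> hom c A (Dom T (P!k)) \<and> fst (q!k) = i \<and>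
        Comp T (snd (q!k)) c = x \<and> Comp T (P!k) c = y"
    and factor_unique: "k < length P \<Longrightarrow> k' < length P \<Longrightarrow>
      hom c A (Dom T (P!k)) \<Longrightarrow> hom c' A (Dom T (P!k')) \<Longrightarrow> fst (q!k) = fst (q!k') \<Longrightarrow>
      Comp T (snd (q!k)) c = Comp T (snd (q!k')) c' \<Longrightarrow> Comp T (P!k) c = Comp T (P!k') c' \<Longrightarrow>
      k = k' \<and> c = c'"

context category
begin

lemma restriction_point:
  assumes pb: "is_pullback T (fund T S) [Dom T g] [Cod T g] (fstr S) [(0, g)] (fund T P) q (fstr P)"
    and "A \<in> Obj T" "i < length S" "hom x A (Dom T (S!i))" "hom y A (Dom T g)"
    and "Comp T (S!i) x = Comp T g y"
  shows "\<exists>!u. fmor T [A] (fund T P) u \<and> fcomp T q u = [(i, x)] \<and> fcomp T (fstr P) u = [(0, y)]"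
proof -
  have "\<And>Q q1 q2. fobj T Q \<Longrightarrow> fmor T Q (fund T S) q1 \<Longrightarrow> fmor T Q [Dom T g] q2 \<Longrightarrow>
        fcomp T (fstr S) q1 = fcomp T [(0, g)] q2 \<Longrightarrow>
        \<exists>!u. fmor T Q (fund T P) u \<and> fcomp T q u = q1 \<and> fcomp T (fstr P) u = q2"
    using pb unfolding is_pullback_def by blast
  from this[of "[A]" "[(i, x)]" "[(0, y)]"] show ?thesis
    using assms by (auto simp: fobj_def fmor_def hom_def fcomp_singleton)
qed

lemma pullback_cone:
  assumes pb: "is_pullback T (fund T S) [Dom T g] [Cod T g] (fstr S) [(0, g)] (fund T P) q (fstr P)"
    and k: "k < length P"
  shows "fst (q!k) < length S \<and> hom (snd (q!k)) (Dom T (P!k)) (Dom T (S!fst (q!k))) \<and>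
    Comp T (S!fst (q!k)) (snd (q!k)) = Comp T g (P!k)"
proof -
  have fm: "fmor T (fund T P) (fund T S) q" and eq: "fcomp T (fstr S) q = fcomp T [(0, g)] (fstr P)"
    using pb unfolding is_pullback_def by blast+
  have a: "length q = length P" "fst (q!k) < length S" "snd (q!k) \<in> Arr T"
    "Dom T (snd (q!k)) = Dom T (P!k)" "Cod T (snd (q!k)) = Dom T (S!fst (q!k))"
    using fm k unfolding fmor_def by auto
  then have "Comp T (S!fst (q!k)) (snd (q!k)) = Comp T g (P!k)"
    using arg_cong[OF eq, of "\<lambda>h. h ! k"] k by (simp add: fcomp_nth)
  then show ?thesis using a by (auto simp: hom_def)
qed

lemma pullback_factor:
  assumes pb: "is_pullback T (fund T S) [Dom T g] [Cod T g] (fstr S) [(0, g)] (fund T P) q (fstr P)"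
    and "A \<in> Obj T" "i < length S" "hom x A (Dom T (S!i))" "hom y A (Dom T g)"
    and "Comp T (S!i) x = Comp T g y"
  shows "\<exists>k c. k < length P \<and> hom c A (Dom T (P!k)) \<and> fst (q!k) = i \<and>
    Comp T (snd (q!k)) c = x \<and> Comp T (P!k) c = y"
proof -
  obtain u where u: "fmor T [A] (fund T P) u" "fcomp T q u = [(i, x)]" "fcomp T (fstr P) u = [(0, y)]"
    using restriction_point[OF assms] by blast
  obtain k c where kc: "u = [(k, c)]" using u(1) unfolding fmor_def
    by (metis One_nat_def length_0_conv length_Suc_conv surj_pair)
  then have "k < length P" "hom c A (Dom T (P!k))" using u(1) by (auto simp: fmor_def hom_def)
  then show ?thesis using u(2,3) kc by (intro exI[of _ k] exI[of _ c]) (auto simp: fcomp_singleton)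
qed

lemma pullback_factor_unique:
  assumes pb: "is_pullback T (fund T S) [Dom T g] [Cod T g] (fstr S) [(0, g)] (fund T P) q (fstr P)"
    and g: "g \<in> Arr T" and S: "fVobj T (Cod T g) S" and P: "fVobj T (Dom T g) P"
    and k: "k < length P" "k' < length P" and c: "hom c A (Dom T (P!k))" "hom c' A (Dom T (P!k'))"
    and e: "fst (q!k) = fst (q!k')" "Comp T (snd (q!k)) c = Comp T (snd (q!k')) c'"
      "Comp T (P!k) c = Comp T (P!k') c'"
  shows "k = k' \<and> c = c'"
proof -
  let ?i = "fst (q!k)" and ?x = "Comp T (snd (q!k)) c" and ?y = "Comp T (P!k) c"
  have ck: "?i < length S" "hom (snd (q!k)) (Dom T (P!k)) (Dom T (S!?i))"
    "Comp T (S!?i) (snd (q!k)) = Comp T g (P!k)"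
    using pullback_cone[OF pb k(1)] by auto
  have hP: "hom (P!k) (Dom T (P!k)) (Dom T g)" using P k unfolding fVobj_def hom_def by auto
  have hS: "hom (S!?i) (Dom T (S!?i)) (Cod T g)" using S ck(1) unfolding fVobj_def hom_def by auto
  have "Comp T (S!?i) ?x = Comp T g ?y"
    using assoc[OF c(1) ck(2) hS] assoc[OF c(1) hP homI[OF g]] ck(3) by simp
  then have "\<exists>!u. fmor T [A] (fund T P) u \<and> fcomp T q u = [(?i, ?x)] \<and> fcomp T (fstr P) u = [(0, ?y)]"
    using restriction_point[OF pb hom_obj(1)[OF c(1)] ck(1)] c(1) ck(2) hP by blast
  moreover have "fmor T [A] (fund T P) [(k, c)] \<and> fcomp T q [(k, c)] = [(?i, ?x)] \<and>
      fcomp T (fstr P) [(k, c)] = [(0, ?y)]"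
    and "fmor T [A] (fund T P) [(k', c')] \<and> fcomp T q [(k', c')] = [(?i, ?x)] \<and>
      fcomp T (fstr P) [(k', c')] = [(0, ?y)]"
    using k c e by (auto simp: fmor_def hom_def fcomp_singleton)
  ultimately show ?thesis by blast
qed

lemma restriction_data_exists:
  assumes g: "g \<in> Arr T" and S: "fVobj T (Cod T g) S" and P: "fVobj T (Dom T g) P"
    and r: "is_restriction T g S P"
  shows "\<exists>q. restriction_data T g S P q"
proof -
  obtain q where pb: "is_pullback T (fund T S) [Dom T g] [Cod T g] (fstr S) [(0, g)] (fund T P) q (fstr P)"
    using r unfolding is_restriction_def by auto
  have "restriction_data_axioms T g S P q"
    by (rule restriction_data_axioms.intro[OF g S P pullback_cone[OF pb] pullback_factor[OF pb]
          pullback_factor_unique[OF pb g S P]])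
  then show ?thesis using category_axioms unfolding restriction_data_def by blast
qed

lemma restriction_exists:
  assumes orbital: "orbital T" and g: "g \<in> Arr T" and S: "fVobj T (Cod T g) S"
  shows "\<exists>P. fVobj T (Dom T g) P \<and> is_restriction T g S P"
proof -
  have "\<forall>s\<in>set S. s \<in> Arr T \<and> Dom T s \<in> Obj T \<and> Cod T s = Cod T g"
    using S arr_obj unfolding fVobj_def by auto
  then obtain P0 p1 p2
    where pb: "is_pullback T (fund T S) [Dom T g] [Cod T g] (fstr S) [(0, g)] P0 p1 p2"
    using orbital[unfolded orbital_def, rule_format, of "fund T S" "[Dom T g]" "[Cod T g]" "fstr S" "[(0, g)]"]
      g arr_obj[OF g] by (force simp: fobj_def fmor_def fund_def in_set_conv_nth)
  have fm: "fmor T P0 [Dom T g] p2" using pb unfolding is_pullback_def by auto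
  define P where "P = map snd p2"
  have l: "length p2 = length P0" using fm unfolding fmor_def by auto
  have "fund T P = P0"
    by (rule nth_equalityI) (use fm l in \<open>auto simp: P_def fund_def fmor_def\<close>)
  moreover have "fstr P = p2"
    by (rule nth_equalityI) (use fm l in \<open>auto simp: P_def fstr_def fmor_def prod_eq_iff\<close>)
  moreover have "fVobj T (Dom T g) P"
    unfolding fVobj_def
  proof (intro conjI[OF arr_obj(1)[OF g]] ballI)
    fix s assume "s \<in> set P"
    then obtain i where "i < length p2" "s = snd (p2!i)" unfolding P_def by (auto simp: in_set_conv_nth)
    then show "s \<in> Arr T \<and> Cod T s = Dom T g" using fm l unfolding fmor_def by auto
  qed
  ultimately show ?thesis unfolding is_restriction_def using pb by metis
qed

end

context restriction_data
begin

lemma section_orbit: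
  assumes i: "i < length S" and iso: "iso (S!i)"
  shows "\<exists>k c. k < length P \<and> hom c (Dom T g) (Dom T (P!k)) \<and> fst (q!k) = i \<and>
      Comp T (snd (q!k)) c = Comp T (inv (S!i)) g \<and> Comp T (P!k) c = Idt T (Dom T g)"
proof -
  have hg: "hom g (Dom T g) (Cod T g)" using arr by auto
  have hS: "hom (S!i) (Dom T (S!i)) (Cod T g)" using fVobj_hom[OF base i] .
  have hi: "hom (inv (S!i)) (Cod T g) (Dom T (S!i))" using inv_hom[OF iso] hS by (auto simp: hom_def)
  have "Comp T (S!i) (Comp T (inv (S!i)) g) = Comp T g (Idt T (Dom T g))"
    using assoc[OF hg hi hS] comp_inv[OF iso] hS hg by (auto simp: hom_def)
  then show ?thesis
    using factor[OF arr_obj(1)[OF arr] i comp_hom[OF hg hi] id_hom[OF arr_obj(1)[OF arr]]] by simp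
qed

lemma section_orbit_unique:
  assumes k: "k < length P" and k': "k' < length P" and c: "hom c (Dom T g) (Dom T (P!k'))"
    and e1: "fst (q!k') = fst (q!k)" and iso: "iso (S!fst (q!k))"
    and e2: "Comp T (snd (q!k')) c = Comp T (inv (S!fst (q!k))) g"
    and e3: "Comp T (P!k') c = Idt T (Dom T g)"
  shows "k' = k \<and> Comp T c (P!k) = Idt T (Dom T (P!k))"
proof -
  let ?i = "fst (q!k)" and ?r = "snd (q!k)"
  have ck: "?i < length S" "hom ?r (Dom T (P!k)) (Dom T (S!?i))" "Comp T (S!?i) ?r = Comp T g (P!k)"
    using cone[OF k] by auto
  have ck': "hom (snd (q!k')) (Dom T (P!k')) (Dom T (S!?i))" using cone[OF k'] e1 by auto
  have hg: "hom g (Dom T g) (Cod T g)" using arr by auto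
  have hS: "hom (S!?i) (Dom T (S!?i)) (Cod T g)" using fVobj_hom[OF base ck(1)] .
  have hi: "hom (inv (S!?i)) (Cod T g) (Dom T (S!?i))" using inv_hom[OF iso] hS by (auto simp: hom_def)
  have hP: "hom (P!k) (Dom T (P!k)) (Dom T g)" using fVobj_hom[OF restr k] .
  have hP': "hom (P!k') (Dom T (P!k')) (Dom T g)" using fVobj_hom[OF restr k'] .
  have "Comp T (snd (q!k')) (Comp T c (P!k)) = Comp T (inv (S!?i)) (Comp T g (P!k))"
    using assoc[OF hP c ck'] e2 assoc[OF hP hg hi] by simp
  also have "\<dots> = ?r"
    using ck(3) assoc[OF ck(2) hS hi] inv_comp[OF iso] hS ck(2) by (auto simp: hom_def)
  finally have a2: "Comp T (snd (q!k')) (Comp T c (P!k)) = ?r" .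
  have a3: "Comp T (P!k') (Comp T c (P!k)) = P!k"
    using assoc[OF hP c hP'] e3 hP by simp
  have "k = k' \<and> Idt T (Dom T (P!k)) = Comp T c (P!k)"
    by (rule factor_unique[OF k k' id_hom[OF hom_obj(1)[OF hP]] comp_hom[OF hP c]])
      (use e1 a2 a3 ck(2) hP in auto)
  then show ?thesis by metis
qed

lemma restriction_of_isos:
  assumes isos: "\<forall>s\<in>set S. iso s"
  shows "(\<forall>p\<in>set P. iso p) \<and> length P = length S"
proof -
  have iso_S: "iso (S!i)" if "i < length S" for i using isos nth_mem[OF that] by blast
  have sec: "\<exists>k' c. k' < length P \<and> hom c (Dom T g) (Dom T (P!k')) \<and> fst (q!k') = fst (q!k) \<and>
      Comp T (snd (q!k')) c = Comp T (inv (S!fst (q!k))) g \<and> Comp T (P!k') c = Idt T (Dom T g)"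
    if k: "k < length P" for k
  proof -
    have i: "fst (q!k) < length S" using cone[OF k] by blast
    from section_orbit[OF i iso_S[OF i]] show ?thesis .
  qed
  have iso_P: "iso (P!k)" if k: "k < length P" for k
  proof -
    obtain k' c where kc: "k' < length P" "hom c (Dom T g) (Dom T (P!k'))" "fst (q!k') = fst (q!k)"
      "Comp T (snd (q!k')) c = Comp T (inv (S!fst (q!k))) g" "Comp T (P!k') c = Idt T (Dom T g)"
      using sec[OF k] by blast
    have "k' = k" "Comp T c (P!k) = Idt T (Dom T (P!k))"
      using section_orbit_unique[OF k kc(1,2,3) iso_S kc(4,5)] cone[OF k] by auto
    then show ?thesis using isoI[OF fVobj_hom[OF restr k]] kc(2,5) by auto
  qed
  have inj: "inj_on (\<lambda>k. fst (q!k)) {..<length P}"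
  proof (rule inj_onI)
    fix k1 k2 assume k: "k1 \<in> {..<length P}" "k2 \<in> {..<length P}" and e: "fst (q!k1) = fst (q!k2)"
    obtain k' c where kc: "k' < length P" "hom c (Dom T g) (Dom T (P!k'))" "fst (q!k') = fst (q!k1)"
      "Comp T (snd (q!k')) c = Comp T (inv (S!fst (q!k1))) g" "Comp T (P!k') c = Idt T (Dom T g)"
      using sec k by blast
    have i: "fst (q!k1) < length S" using cone k by blast
    have "k' = k1" using section_orbit_unique[of k1 k' c] k kc iso_S[OF i] by auto
    moreover have "k' = k2" using section_orbit_unique[of k2 k' c] k kc e iso_S[OF i] by auto
    ultimately show "k1 = k2" by simp
  qed
  have "(\<lambda>k. fst (q!k)) ` {..<length P} = {..<length S}"
  proof
    show "(\<lambda>k. fst (q!k)) ` {..<length P} \<subseteq> {..<length S}" using cone by auto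
    show "{..<length S} \<subseteq> (\<lambda>k. fst (q!k)) ` {..<length P}"
    proof
      fix i assume "i \<in> {..<length S}"
      then obtain k c where "k < length P" "fst (q!k) = i" using section_orbit iso_S by blast
      then show "i \<in> (\<lambda>k. fst (q!k)) ` {..<length P}" by force
    qed
  qed
  then have "length P = length S" using card_image[OF inj] by simp
  then show ?thesis using iso_P by (auto simp: in_set_conv_nth)
qed

end

section \<open>Coproducts of lists of orbits\<close>

definition block_pos :: "nat list \<Rightarrow> nat \<Rightarrow> nat \<Rightarrow> nat" where
  "block_pos ls i l = sum_list (take i ls) + l"

lemma nth_concat_block_pos:
  "i < length xss \<Longrightarrow> l < length (xss!i) \<Longrightarrow> concat xss ! block_pos (map length xss) i l = xss!i!l"
proof (induction xss arbitrary: i)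
  case (Cons xs xss)
  then show ?case by (cases i) (auto simp: block_pos_def nth_append)
qed simp

lemma block_pos_less: "i < length ls \<Longrightarrow> l < ls!i \<Longrightarrow> block_pos ls i l < sum_list ls"
proof (induction ls arbitrary: i)
  case (Cons a ls)
  then show ?case by (cases i) (auto simp: block_pos_def)
qed simp

lemma block_pos_surj: "n < sum_list ls \<Longrightarrow> \<exists>i l. i < length ls \<and> l < ls!i \<and> n = block_pos ls i l"
proof (induction ls arbitrary: n)
  case (Cons a ls)
  show ?case
  proof (cases "n < a")
    case True
    then show ?thesis by (intro exI[of _ 0] exI[of _ n]) (auto simp: block_pos_def)
  next
    case False
    have "n - a < sum_list ls" using Cons.prems False by simp
    then obtain i l where "i < length ls" "l < ls!i" "n - a = block_pos ls i l"
      using Cons.IH by blast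
    then show ?thesis using False by (intro exI[of _ "Suc i"] exI[of _ l]) (auto simp: block_pos_def)
  qed
qed simp

lemma block_pos_inj: "i < length ls \<Longrightarrow> l < ls!i \<Longrightarrow> i' < length ls \<Longrightarrow> l' < ls!i' \<Longrightarrow>
   block_pos ls i l = block_pos ls i' l' \<Longrightarrow> i = i' \<and> l = l'"
proof (induction ls arbitrary: i i')
  case (Cons a ls)
  then show ?case by (cases i; cases i') (auto simp: block_pos_def)
qed simp

lemma grouped_indices:
  "distinct (concat (map (\<lambda>j. filter (\<lambda>k. \<pi> k = j) [0..<n]) [0..<m])) \<and>
   set (concat (map (\<lambda>j. filter (\<lambda>k. \<pi> k = j) [0..<n]) [0..<m])) = {k. k < n \<and> \<pi> k < m}"
  by (induction m) (auto simp: less_Suc_eq)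

lemma fcoprod_eq_concat:
  "length Ts = length S \<Longrightarrow> fcoprod C S Ts = concat (map (\<lambda>i. map (Comp C (S!i)) (Ts!i)) [0..<length S])"
  unfolding fcoprod_def find_def
  by (rule arg_cong[where f = concat], rule nth_equalityI) auto

lemma length_fcoprod: "length Ts = length S \<Longrightarrow> length (fcoprod C S Ts) = sum_list (map length Ts)"
proof -
  assume l: "length Ts = length S"
  have "map length (map (\<lambda>i. map (Comp C (S!i)) (Ts!i)) [0..<length S]) = map length Ts"
    by (rule nth_equalityI) (use l in auto)
  then show ?thesis unfolding fcoprod_eq_concat[OF l] length_concat by (simp add: comp_def)
qed

lemma nth_fcoprod: "length Ts = length S \<Longrightarrow> i < length S \<Longrightarrow> l < length (Ts!i) \<Longrightarrow>
   fcoprod C S Ts ! block_pos (map length Ts) i l = Comp C (S!i) (Ts!i!l)"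
proof -
  assume a: "length Ts = length S" "i < length S" "l < length (Ts!i)"
  have "map length (map (\<lambda>i. map (Comp C (S!i)) (Ts!i)) [0..<length S]) = map length Ts"
    by (rule nth_equalityI) (use a in auto)
  then show ?thesis unfolding fcoprod_eq_concat[OF a(1)]
    using nth_concat_block_pos[of i "map (\<lambda>i. map (Comp C (S!i)) (Ts!i)) [0..<length S]" l] a by simp
qed

lemma set_fcoprodE:
  assumes "length Ts = length S" "s \<in> set (fcoprod C S Ts)"
  obtains i t where "i < length S" "t \<in> set (Ts!i)" "s = Comp C (S!i) t"
  using assms unfolding fcoprod_eq_concat[OF assms(1)] by auto

lemma fcoprod_replicate_singletons:
  "length xs = n \<Longrightarrow> fcoprod C (replicate n a) (map (\<lambda>x. [x]) xs) = map (Comp C a) xs"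
  by (induction xs arbitrary: n) (auto simp: fcoprod_def find_def)

lemma fcoprod_singleton: "fcoprod C [a] [X] = map (Comp C a) X"
  and fcoprod_pair: "fcoprod C [a, b] [X, Y] = map (Comp C a) X @ map (Comp C b) Y"
  by (simp_all add: fcoprod_def find_def)

lemma fcoprod_grouped:
  assumes "\<forall>k<length S. \<pi> k < length A \<and> Comp C (A!\<pi> k) (x k) = S!k"
  shows "fcoprod C A (map (\<lambda>j. map x (filter (\<lambda>k. \<pi> k = j) [0..<length S])) [0..<length A]) =
    map (nth S) (concat (map (\<lambda>j. filter (\<lambda>k. \<pi> k = j) [0..<length S]) [0..<length A]))"
proof -
  have l: "length (map (\<lambda>j. map x (filter (\<lambda>k. \<pi> k = j) [0..<length S])) [0..<length A]) = length A"
    by simp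
  show ?thesis unfolding fcoprod_eq_concat[OF l] map_concat
    using assms by (auto intro!: arg_cong[where f = concat])
qed

lemma concat_select_two:
  assumes "k < k'" "k' < n"
  shows "concat (map (\<lambda>i. if i = k then [f i] else if i = k' then [f i] else []) [0..<n]) = [f k, f k']"
proof -
  have "[0..<n] = [0..<k] @ [k] @ [Suc k..<k'] @ [k'] @ [Suc k'..<n]"
  proof -
    have "[0..<n] = [0..<k'] @ [k'..<n]" using assms upt_add_eq_append[of 0 k' "n - k'"] by simp
    also have "[k'..<n] = k' # [Suc k'..<n]" using assms upt_conv_Cons by simp
    also have "[0..<k'] = [0..<k] @ [k..<k']" using assms upt_add_eq_append[of 0 k "k' - k"] by simp
    also have "[k..<k'] = k # [Suc k..<k']" using assms upt_conv_Cons by simp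
    finally show ?thesis by simp
  qed
  moreover have empty: "concat (map (\<lambda>i. if i = k then [f i] else if i = k' then [f i] else []) xs) = []"
    if "\<forall>i\<in>set xs. i \<noteq> k \<and> i \<noteq> k'" for xs
    using that by (auto simp: concat_eq_Nil_conv)
  ultimately show ?thesis using assms
    by (simp only: map_append concat_append list.map concat.simps append.simps) (simp add: empty)
qed

lemma fcoprod_select_two:
  assumes "k < k'" "k' < length S"
  shows "fcoprod C S (map (\<lambda>i. if i = k then [a] else if i = k' then [b] else []) [0..<length S])
     = [Comp C (S!k) a, Comp C (S!k') b]"
proof -
  let ?f = "\<lambda>i. if i = k then Comp C (S!i) a else Comp C (S!i) b"
  have "fcoprod C S (map (\<lambda>i. if i = k then [a] else if i = k' then [b] else []) [0..<length S])
     = concat (map (\<lambda>i. if i = k then [?f i] else if i = k' then [?f i] else []) [0..<length S])"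
    using assms by (subst fcoprod_eq_concat) (auto intro!: arg_cong[where f = concat])
  then show ?thesis using concat_select_two[OF assms, of ?f] assms by simp
qed

section \<open>Unital weak indexing systems and the left adjoint\<close>

lemma wIndSys_fVobj: "wIndSys T C \<Longrightarrow> S \<in> C V \<Longrightarrow> V \<in> Obj T \<and> fVobj T V S"
  unfolding wIndSys_def full_tsubcat_def by blast

lemma wIndSys_iso_closed:
  "wIndSys T C \<Longrightarrow> S \<in> C V \<Longrightarrow> fVobj T V S' \<Longrightarrow> fV_iso T S S' \<Longrightarrow> S' \<in> C V"
  using wIndSys_fVobj[of T C S V] unfolding wIndSys_def full_tsubcat_def by blast

lemma wIndSys_restriction_closed: "wIndSys T C \<Longrightarrow> g \<in> Arr T \<Longrightarrow> S \<in> C (Cod T g) \<Longrightarrow>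
    fVobj T (Dom T g) P \<Longrightarrow> is_restriction T g S P \<Longrightarrow> P \<in> C (Dom T g)"
  unfolding wIndSys_def full_tsubcat_def by blast

lemma wIndSys_fcoprod_closed: "wIndSys T C \<Longrightarrow> S \<in> C V \<Longrightarrow> length Ts = length S \<Longrightarrow>
    (\<And>i. i < length S \<Longrightarrow> Ts!i \<in> C (Dom T (S!i))) \<Longrightarrow> fcoprod T S Ts \<in> C V"
  using wIndSys_fVobj[of T C S V] unfolding wIndSys_def by blast

lemma wIndSys_terminal: "wIndSys T C \<Longrightarrow> S \<in> C V \<Longrightarrow> [Idt T V] \<in> C V"
  using wIndSys_fVobj[of T C S V] unfolding wIndSys_def by blast

lemma uni_wIndSys_wIndSys: "uni_wIndSys T C \<Longrightarrow> wIndSys T C"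
  unfolding uni_wIndSys_def by blast

lemma uni_wIndSys_appendD: "uni_wIndSys T C \<Longrightarrow> S @ S' \<in> C V \<Longrightarrow> S \<in> C V \<and> S' \<in> C V"
  using wIndSys_fVobj[of T C "S @ S'" V] unfolding uni_wIndSys_def by blast

lemma
  assumes u: "uni_wIndSys T C" and V: "V \<in> Obj T"
  shows uni_wIndSys_terminal: "[Idt T V] \<in> C V"
    and uni_wIndSys_empty: "[] \<in> C V"
proof -
  have "\<exists>S. S \<in> C V" using u V unfolding uni_wIndSys_def by blast
  then show "[Idt T V] \<in> C V" using wIndSys_terminal[OF uni_wIndSys_wIndSys[OF u]] by blast
  then show "[] \<in> C V" using uni_wIndSys_appendD[OF u, of "[]" "[Idt T V]"] by simp
qed

lemma uni_wIndSys_orbit: "uni_wIndSys T C \<Longrightarrow> S \<in> C V \<Longrightarrow> k < length S \<Longrightarrow> [S!k] \<in> C V"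
  using uni_wIndSys_appendD[of T C "take k S" "[S!k] @ drop (Suc k) S" V]
    uni_wIndSys_appendD[of T C "[S!k]" "drop (Suc k) S" V]
  by (simp add: id_take_nth_drop[symmetric])

context category
begin

lemma uni_wIndSys_replicate_id:
  assumes u: "uni_wIndSys T C" and V: "V \<in> Obj T" and two: "replicate 2 (Idt T V) \<in> C V"
  shows "replicate n (Idt T V) \<in> C V"
proof (induction n)
  case 0
  then show ?case using uni_wIndSys_empty[OF u V] by simp
next
  case (Suc n)
  have "fcoprod T (replicate 2 (Idt T V)) [replicate n (Idt T V), [Idt T V]] \<in> C V"
    by (rule wIndSys_fcoprod_closed[OF uni_wIndSys_wIndSys[OF u] two])
      (use Suc uni_wIndSys_terminal[OF u V] V in \<open>auto simp: nth_Cons'\<close>)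
  moreover have "fcoprod T (replicate 2 (Idt T V)) [replicate n (Idt T V), [Idt T V]] =
      replicate (Suc n) (Idt T V)"
    using id_left[OF id_hom[OF V]]
    by (simp add: numeral_2_eq_2 fcoprod_pair replicate_append_same[symmetric])
  ultimately show ?case by simp
qed

lemma uni_wIndSys_isos:
  assumes u: "uni_wIndSys T C" and S: "fVobj T V S" and isos: "\<forall>s\<in>set S. iso s"
    and small: "length S \<le> 1 \<or> replicate 2 (Idt T V) \<in> C V"
  shows "S \<in> C V"
proof -
  have V: "V \<in> Obj T" using fVobj_obj[OF S] .
  have "replicate (length S) (Idt T V) \<in> C V"
  proof (cases "replicate 2 (Idt T V) \<in> C V")
    case True
    then show ?thesis using uni_wIndSys_replicate_id[OF u V] by blast
  next
    case False
    then have "S = [] \<or> length S = 1" using small by (cases S) auto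
    then show ?thesis using uni_wIndSys_terminal[OF u V] uni_wIndSys_empty[OF u V] by auto
  qed
  then show ?thesis
    using wIndSys_iso_closed[OF uni_wIndSys_wIndSys[OF u] _ S fV_iso_replicate_id[OF S isos]] by blast
qed

text \<open>The two orbits are picked out by a coproduct over \<open>P\<close> with their inverses as summands
  and \<open>\<emptyset>\<close> elsewhere.\<close>

lemma uni_wIndSys_two_iso_orbits:
  assumes u: "uni_wIndSys T C" and P: "P \<in> C W" and ab: "a < length P" "b < length P" "a \<noteq> b"
    and isos: "iso (P!a)" "iso (P!b)"
  shows "replicate 2 (Idt T W) \<in> C W"
proof -
  have PW: "fVobj T W P" using wIndSys_fVobj[OF uni_wIndSys_wIndSys[OF u] P] by blast
  have inv_mem: "[inv (P!t)] \<in> C (Dom T (P!t))" if t: "t < length P" "iso (P!t)" for t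
  proof -
    have "fVobj T (Dom T (P!t)) [inv (P!t)]"
      using inv_hom[OF t(2)] fVobj_hom[OF PW t(1)] hom_obj unfolding fVobj_def hom_def by auto
    then show ?thesis using uni_wIndSys_isos[OF u] inv_iso[OF t(2)] by auto
  qed
  have comp_inv_W: "Comp T (P!t) (inv (P!t)) = Idt T W" if t: "t < length P" "iso (P!t)" for t
    using comp_inv[OF t(2)] fVobj_hom[OF PW t(1)] by (auto simp: hom_def)
  have pair: "[Comp T (P!k) (inv (P!k)), Comp T (P!k') (inv (P!k'))] \<in> C W"
    if kk: "k < k'" "k' < length P" "iso (P!k)" "iso (P!k')" for k k'
  proof -
    let ?Ts = "map (\<lambda>i. if i = k then [inv (P!k)] else if i = k' then [inv (P!k')] else []) [0..<length P]"
    have "fcoprod T P ?Ts \<in> C W"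
    proof (rule wIndSys_fcoprod_closed[OF uni_wIndSys_wIndSys[OF u] P])
      fix t assume t: "t < length P"
      have "Dom T (P!t) \<in> Obj T" using fVobj_hom[OF PW t] hom_obj by blast
      then show "?Ts ! t \<in> C (Dom T (P!t))"
        using inv_mem kk t uni_wIndSys_empty[OF u] by auto
    qed simp
    then show ?thesis
      using fcoprod_select_two[OF kk(1,2), where C = T and a = "inv (P!k)" and b = "inv (P!k')"] by simp
  qed
  have "[Idt T W, Idt T W] \<in> C W"
  proof (cases "a < b")
    case True
    then show ?thesis using pair[OF True ab(2) isos] comp_inv_W ab isos by simp
  next
    case False
    then have ba: "b < a" using ab(3) by simp
    show ?thesis using pair[OF ba ab(1) isos(2,1)] comp_inv_W ab isos by simp
  qed
  then show ?thesis by (simp add: numeral_2_eq_2)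
qed

end

locale orbital_category = category T for T :: "('o, 'm) cat" +
  assumes orbital: "orbital T"
begin

lemma restrictionE:
  assumes g: "g \<in> Arr T" and S: "fVobj T (Cod T g) S"
  obtains P q where "fVobj T (Dom T g) P" "is_restriction T g S P" "restriction_data T g S P q"
  using restriction_exists[OF orbital g S] restriction_data_exists[OF g S] by blast

lemma family_nabla_u:
  assumes u: "uni_wIndSys T C"
  shows "is_family T (nabla_u T C)"
  unfolding is_family_def
proof (intro conjI ballI impI)
  show "nabla_u T C \<subseteq> Obj T" unfolding nabla_u_def by auto
next
  fix f assume f: "f \<in> Arr T" and "Cod T f \<in> nabla_u T C"
  then have V: "Cod T f \<in> Obj T" and two: "replicate 2 (Idt T (Cod T f)) \<in> C (Cod T f)"
    unfolding nabla_u_def by auto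
  have U: "Dom T f \<in> Obj T" using arr_obj f by auto
  obtain P q where P: "fVobj T (Dom T f) P" "is_restriction T f (replicate 2 (Idt T (Cod T f))) P"
    and q: "restriction_data T f (replicate 2 (Idt T (Cod T f))) P q"
    using restrictionE[OF f fVobj_replicate_id[OF V]] .
  have "P \<in> C (Dom T f)"
    using wIndSys_restriction_closed[OF uni_wIndSys_wIndSys[OF u] f two P] .
  moreover have "fV_iso T P (replicate 2 (Idt T (Dom T f)))"
    using restriction_data.restriction_of_isos[OF q] id_iso[OF V] fV_iso_replicate_id_iff[OF P(1)]
    by simp
  ultimately have "replicate 2 (Idt T (Dom T f)) \<in> C (Dom T f)"
    using wIndSys_iso_closed[OF uni_wIndSys_wIndSys[OF u]] fVobj_replicate_id[OF U] by blast
  then show "Dom T f \<in> nabla_u T C" unfolding nabla_u_def using U by auto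
qed

end

lemma nabla_u_mono: "C \<le> D \<Longrightarrow> nabla_u T C \<subseteq> nabla_u T D"
  unfolding nabla_u_def le_fun_def by auto

definition nabla_ladj :: "('o, 'm) cat \<Rightarrow> 'o set \<Rightarrow> ('o, 'm) tsubcat" where
  "nabla_ladj T F = (\<lambda>V. F0 T V \<union> EFinf T F V)"

context category
begin

lemma nabla_ladj_iff:
  "S \<in> nabla_ladj T F V \<longleftrightarrow> fVobj T V S \<and> (\<forall>s\<in>set S. iso s) \<and> (length S \<le> 1 \<or> V \<in> F)"
proof (cases "fVobj T V S")
  case True
  then have "fV_iso T S [] \<longleftrightarrow> length S = 0 \<and> (\<forall>s\<in>set S. iso s)"
     "fV_iso T S [Idt T V] \<longleftrightarrow> length S = 1 \<and> (\<forall>s\<in>set S. iso s)"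
     "\<And>n. fV_iso T S (replicate n (Idt T V)) \<longleftrightarrow> length S = n \<and> (\<forall>s\<in>set S. iso s)"
    using fV_iso_replicate_id_iff[of V S 0] fV_iso_replicate_id_iff[of V S 1]
      fV_iso_replicate_id_iff[of V S] by auto
  moreover have "length S \<le> 1 \<longleftrightarrow> S = [] \<or> length S = 1" by (cases S) auto
  ultimately show ?thesis using True fVobj_obj unfolding nabla_ladj_def F0_def EFinf_def by auto
qed (auto simp: nabla_ladj_def F0_def EFinf_def)

lemma fVobj_fcoprod:
  assumes S: "fVobj T V S" and l: "length Ts = length S"
    and Ts: "\<And>i. i < length S \<Longrightarrow> fVobj T (Dom T (S!i)) (Ts!i)"
  shows "fVobj T V (fcoprod T S Ts)"
  unfolding fVobj_def
proof (intro conjI[OF fVobj_obj[OF S]] ballI)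
  fix s assume "s \<in> set (fcoprod T S Ts)"
  then obtain i t where i: "i < length S" "t \<in> set (Ts!i)" "s = Comp T (S!i) t"
    using set_fcoprodE[OF l] by metis
  have "hom t (Dom T t) (Dom T (S!i))" using Ts[OF i(1)] i(2) unfolding fVobj_def hom_def by auto
  then have "hom s (Dom T t) V" using fVobj_hom[OF S i(1)] i(3) by auto
  then show "s \<in> Arr T \<and> Cod T s = V" by (auto simp: hom_def)
qed

lemma nabla_ladj_restriction_closed:
  assumes F: "is_family T F" and g: "g \<in> Arr T" and S: "S \<in> nabla_ladj T F (Cod T g)"
    and P: "fVobj T (Dom T g) P" "is_restriction T g S P"
  shows "P \<in> nabla_ladj T F (Dom T g)"
proof -
  have S': "fVobj T (Cod T g) S" "\<forall>s\<in>set S. iso s" "length S \<le> 1 \<or> Cod T g \<in> F"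
    using S unfolding nabla_ladj_iff by auto
  obtain q where q: "restriction_data T g S P q" using restriction_data_exists[OF g S'(1) P] by blast
  have "(\<forall>p\<in>set P. iso p) \<and> length P = length S"
    using restriction_data.restriction_of_isos[OF q S'(2)] .
  then show ?thesis using S'(3) F g P unfolding nabla_ladj_iff is_family_def by auto
qed

lemma nabla_ladj_fcoprod_closed:
  assumes F: "is_family T F" and S: "S \<in> nabla_ladj T F V" and l: "length Ts = length S"
    and Ts: "\<And>i. i < length S \<Longrightarrow> Ts!i \<in> nabla_ladj T F (Dom T (S!i))"
  shows "fcoprod T S Ts \<in> nabla_ladj T F V"
proof -
  have S': "fVobj T V S" "\<forall>s\<in>set S. iso s" "length S \<le> 1 \<or> V \<in> F"
    using S unfolding nabla_ladj_iff by auto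
  have Ts': "fVobj T (Dom T (S!i)) (Ts!i)" "\<forall>s\<in>set (Ts!i). iso s"
    "length (Ts!i) \<le> 1 \<or> Dom T (S!i) \<in> F" if "i < length S" for i
    using Ts[OF that] unfolding nabla_ladj_iff by auto
  have "\<forall>s\<in>set (fcoprod T S Ts). iso s"
  proof
    fix s assume "s \<in> set (fcoprod T S Ts)"
    then obtain i t where i: "i < length S" "t \<in> set (Ts!i)" "s = Comp T (S!i) t"
      using set_fcoprodE[OF l] by metis
    have "Cod T t = Dom T (S!i)" using Ts'(1)[OF i(1)] i(2) unfolding fVobj_def by auto
    then show "iso s" using comp_iso[of t "S!i"] Ts'(2)[OF i(1)] S'(2) i by auto
  qed
  moreover have "length (fcoprod T S Ts) \<le> 1 \<or> V \<in> F"
  proof (cases "V \<in> F \<or> S = []")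
    case False
    then obtain s X where s: "S = [s]" "Ts = [X]" using S'(3) l
      by (cases S; cases Ts) auto
    have "iso s" "hom s (Dom T s) V" using S' fVobj_hom[OF S'(1), of 0] s by auto
    then have "hom (inv s) V (Dom T s)" using inv_hom by (auto simp: hom_def)
    then have "Dom T s \<notin> F" using False F unfolding is_family_def hom_def by auto
    then show ?thesis using Ts'(3)[of 0] s by (simp add: fcoprod_singleton)
  qed (use l in \<open>auto simp: fcoprod_def\<close>)
  ultimately show ?thesis unfolding nabla_ladj_iff using fVobj_fcoprod[OF S'(1) l] Ts'(1) by blast
qed

lemma uni_wIndSys_nabla_ladj:
  assumes F: "is_family T F"
  shows "uni_wIndSys T (nabla_ladj T F)"
proof -
  have "full_tsubcat T (nabla_ladj T F)"
    unfolding full_tsubcat_def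
  proof (intro conjI ballI allI impI)
    fix V assume "V \<notin> Obj T"
    then show "nabla_ladj T F V = {}" unfolding nabla_ladj_def F0_def EFinf_def by auto
  next
    fix V S S' assume "S \<in> nabla_ladj T F V" "fVobj T V S' \<and> fV_iso T S S'"
    then show "S' \<in> nabla_ladj T F V"
      unfolding nabla_ladj_iff using fV_iso_length[of S S'] fV_iso_isos[of V S' S] by auto
  qed (use nabla_ladj_restriction_closed[OF F] in \<open>auto simp: nabla_ladj_iff\<close>)
  moreover have "[Idt T V] \<in> nabla_ladj T F V" "[] \<in> nabla_ladj T F V" if "V \<in> Obj T" for V
    unfolding nabla_ladj_iff using that id_iso fVobj_replicate_id[OF that, of 1] by (auto simp: fVobj_def)
  moreover have "S \<in> nabla_ladj T F V \<and> S' \<in> nabla_ladj T F V" if "S @ S' \<in> nabla_ladj T F V" for V S S'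
    using that unfolding nabla_ladj_iff fVobj_append by auto
  ultimately show ?thesis
    unfolding uni_wIndSys_def wIndSys_def using nabla_ladj_fcoprod_closed[OF F] by blast
qed

lemma replicate_two_mem_nabla_ladj:
  "replicate 2 (Idt T V) \<in> nabla_ladj T F V \<longleftrightarrow> V \<in> Obj T \<and> V \<in> F"
proof -
  have "fVobj T V (replicate 2 (Idt T V)) \<longleftrightarrow> V \<in> Obj T" using fVobj_replicate_id fVobj_obj by blast
  then show ?thesis unfolding nabla_ladj_iff using id_iso by auto
qed

lemma nabla_ladj_le_iff:
  assumes F: "is_family T F" and u: "uni_wIndSys T C"
  shows "nabla_ladj T F \<le> C \<longleftrightarrow> F \<subseteq> nabla_u T C"
proof
  assume "nabla_ladj T F \<le> C"
  then show "F \<subseteq> nabla_u T C"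
    using F replicate_two_mem_nabla_ladj unfolding nabla_u_def is_family_def le_fun_def by blast
next
  assume nabla: "F \<subseteq> nabla_u T C"
  show "nabla_ladj T F \<le> C"
  proof (rule le_funI, rule subsetI)
    fix V S assume "S \<in> nabla_ladj T F V"
    then show "S \<in> C V"
      using uni_wIndSys_isos[OF u] nabla unfolding nabla_ladj_iff nabla_u_def by blast
  qed
qed

lemma nabla_u_nabla_ladj: "is_family T F \<Longrightarrow> nabla_u T (nabla_ladj T F) = F"
  unfolding nabla_u_def is_family_def using replicate_two_mem_nabla_ladj by auto

end

section \<open>The right adjoint\<close>

context category
begin

definition factors_through :: "'m list \<Rightarrow> 'm \<Rightarrow> nat \<Rightarrow> 'm \<Rightarrow> bool" where
  "factors_through S g i x \<longleftrightarrow> i < length S \<and> hom x (Dom T g) (Dom T (S!i)) \<and> Comp T (S!i) x = g"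

definition separated :: "'o set \<Rightarrow> 'm list \<Rightarrow> bool" where
  "separated F S \<longleftrightarrow> (\<forall>g i x j y. g \<in> Arr T \<and> factors_through S g i x \<and> factors_through S g j y \<and>
      (i, x) \<noteq> (j, y) \<longrightarrow> Dom T g \<in> F)"

definition nabla_radj :: "'o set \<Rightarrow> ('o, 'm) tsubcat" where
  "nabla_radj F = (\<lambda>V. if V \<in> Obj T then {S. fVobj T V S \<and> separated F S} else {})"

lemma separatedI:
  "(\<And>g i x j y. g \<in> Arr T \<Longrightarrow> factors_through S g i x \<Longrightarrow> factors_through S g j y \<Longrightarrow>
      (i, x) \<noteq> (j, y) \<Longrightarrow> Dom T g \<in> F) \<Longrightarrow> separated F S"
  unfolding separated_def by blast

lemma separatedD: "separated F S \<Longrightarrow> g \<in> Arr T \<Longrightarrow> factors_through S g i x \<Longrightarrow>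
    factors_through S g j y \<Longrightarrow> (i, x) \<noteq> (j, y) \<Longrightarrow> Dom T g \<in> F"
  unfolding separated_def by blast

lemma nabla_radj_iff: "S \<in> nabla_radj F V \<longleftrightarrow> fVobj T V S \<and> separated F S"
  unfolding nabla_radj_def by (auto dest: fVobj_obj)

lemma separated_mono:
  assumes "F \<subseteq> F'" "separated F S"
  shows "separated F' S"
proof (rule separatedI)
  fix g i x j y
  assume "g \<in> Arr T" "factors_through S g i x" "factors_through S g j y" "(i, x) \<noteq> (j, y)"
  then show "Dom T g \<in> F'" using assms separatedD by blast
qed

lemma separated_fV_iso:
  assumes S: "fVobj T V S" and S': "fVobj T V S'" and iso: "fV_iso T S S'" and sep: "separated F S"
  shows "separated F S'"
proof (rule separatedI)
  obtain \<sigma> \<phi> where \<sigma>: "bij_betw \<sigma> {..<length S} {..<length S'}" and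
    \<phi>: "\<forall>i<length S. iso (\<phi> i) \<and> Dom T (\<phi> i) = Dom T (S!i) \<and>
        Cod T (\<phi> i) = Dom T (S'!(\<sigma> i)) \<and> Comp T (S'!(\<sigma> i)) (\<phi> i) = S!i"
    using iso unfolding fV_iso_def by auto
  have pull: "\<exists>i. i < length S \<and> \<sigma> i = i' \<and> factors_through S g i (Comp T (inv (\<phi> i)) x')"
    if l: "factors_through S' g i' x'" for g i' x'
  proof -
    have "i' \<in> \<sigma> ` {..<length S}" using \<sigma> l unfolding bij_betw_def factors_through_def by auto
    then obtain i where i: "i < length S" "\<sigma> i = i'" by auto
    have ip: "iso (\<phi> i)" using \<phi> i by auto
    have hp: "hom (\<phi> i) (Dom T (S!i)) (Dom T (S'!i'))" using \<phi> i iso_arr[OF ip] by (auto simp: hom_def)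
    have hi: "hom (inv (\<phi> i)) (Dom T (S'!i')) (Dom T (S!i))" using inv_hom[OF ip] hp by (auto simp: hom_def)
    have hx: "hom x' (Dom T g) (Dom T (S'!i'))" and e: "Comp T (S'!i') x' = g" and i': "i' < length S'"
      using l unfolding factors_through_def by auto
    have hs': "hom (S'!i') (Dom T (S'!i')) V" using fVobj_hom[OF S' i'] .
    have "Comp T (S!i) (Comp T (inv (\<phi> i)) x') = Comp T (Comp T (Comp T (S'!i') (\<phi> i)) (inv (\<phi> i))) x'"
      using assoc[OF hx hi] fVobj_hom[OF S i(1)] \<phi> i by auto
    also have "\<dots> = g"
      using assoc[OF hi hp hs'] comp_inv[OF ip] hp hs' e by (auto simp: hom_def)
    finally show ?thesis unfolding factors_through_def using i hi hx by auto
  qed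
  fix g i' x' j' y'
  assume g: "g \<in> Arr T" and l: "factors_through S' g i' x'" "factors_through S' g j' y'"
    and ne: "(i', x') \<noteq> (j', y')"
  obtain i where i: "i < length S" "\<sigma> i = i'" "factors_through S g i (Comp T (inv (\<phi> i)) x')"
    using pull[OF l(1)] by blast
  obtain j where j: "j < length S" "\<sigma> j = j'" "factors_through S g j (Comp T (inv (\<phi> j)) y')"
    using pull[OF l(2)] by blast
  have "x' = y'" if "i = j" "Comp T (inv (\<phi> i)) x' = Comp T (inv (\<phi> j)) y'"
  proof (rule iso_cancel_left[OF inv_iso[of "\<phi> i"]])
    show "iso (\<phi> i)" using \<phi> i by auto
    then have "Dom T (inv (\<phi> i)) = Dom T (S'!i')" using inv_hom \<phi> i by (auto simp: hom_def)
    then show "hom x' (Dom T g) (Dom T (inv (\<phi> i)))" "hom y' (Dom T g) (Dom T (inv (\<phi> i)))"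
      using l i j that unfolding factors_through_def by auto
  qed (use that in simp)
  then have "(i, Comp T (inv (\<phi> i)) x') \<noteq> (j, Comp T (inv (\<phi> j)) y')" using ne i j by auto
  then show "Dom T g \<in> F" using separatedD[OF sep g i(3) j(3)] by blast
qed

lemma separated_singleton_id: "V \<in> Obj T \<Longrightarrow> separated F [Idt T V]"
  by (rule separatedI) (auto simp: factors_through_def hom_def)

lemma separated_appendD:
  assumes "separated F (S @ S')"
  shows "separated F S" and "separated F S'"
proof (rule_tac [!] separatedI)
  fix g i x j y assume "g \<in> Arr T" "factors_through S g i x" "factors_through S g j y" "(i, x) \<noteq> (j, y)"
  then show "Dom T g \<in> F"
    using separatedD[OF assms, of g i x j y] by (auto simp: factors_through_def nth_append)
next
  fix g i x j y assume "g \<in> Arr T" "factors_through S' g i x" "factors_through S' g j y" "(i, x) \<noteq> (j, y)"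
  then show "Dom T g \<in> F"
    using separatedD[OF assms, of g "length S + i" x "length S + j" y]
    by (auto simp: factors_through_def nth_append)
qed

end

context restriction_data
begin

lemma separated_restriction:
  assumes sep: "separated F S"
  shows "separated F P"
proof (rule separatedI)
  have hh: "hom g (Dom T g) (Cod T g)" using arr by auto
  fix h k c k' c'
  assume "h \<in> Arr T" and l: "factors_through P h k c" "factors_through P h k' c'" and ne: "(k, c) \<noteq> (k', c')"
  have push: "factors_through S (Comp T g h) (fst (q!k)) (Comp T (snd (q!k)) c)"
    if l: "factors_through P h k c" for k c
  proof -
    have k: "k < length P" "hom c (Dom T h) (Dom T (P!k))" "Comp T (P!k) c = h"
      using l unfolding factors_through_def by auto
    have ck: "fst (q!k) < length S" "hom (snd (q!k)) (Dom T (P!k)) (Dom T (S!fst (q!k)))"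
      "Comp T (S!fst (q!k)) (snd (q!k)) = Comp T g (P!k)" using cone[OF k(1)] by auto
    have hP: "hom (P!k) (Dom T (P!k)) (Dom T g)" using fVobj_hom[OF restr k(1)] .
    have "Comp T (S!fst (q!k)) (Comp T (snd (q!k)) c) = Comp T g h"
      using assoc[OF k(2) ck(2) fVobj_hom[OF base ck(1)]] ck(3) assoc[OF k(2) hP hh] k(3) by simp
    moreover have "Dom T (Comp T g h) = Dom T h"
      using comp_hom[OF comp_hom[OF k(2) hP] hh] k(3) by (simp add: hom_def)
    ultimately show ?thesis using ck(1) comp_hom[OF k(2) ck(2)] unfolding factors_through_def by simp
  qed
  have "k < length P" "hom c (Dom T h) (Dom T (P!k))" "Comp T (P!k) c = h"
    using l(1) unfolding factors_through_def by auto
  then have hg: "hom h (Dom T h) (Dom T g)" using comp_hom[OF _ fVobj_hom[OF restr]] by metis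
  have "(fst (q!k), Comp T (snd (q!k)) c) \<noteq> (fst (q!k'), Comp T (snd (q!k')) c')"
    using factor_unique[of k k' c "Dom T h" c'] l ne unfolding factors_through_def by auto
  then have "Dom T (Comp T g h) \<in> F"
    using separatedD[OF sep _ push[OF l(1)] push[OF l(2)]] comp_hom[OF hg hh] by (auto simp: hom_def)
  then show "Dom T h \<in> F" using comp_hom[OF hg hh] by (simp add: hom_def)
qed

end

context category
begin

lemma factors_through_fcoprod:
  assumes S: "fVobj T V S" and l: "length Ts = length S"
    and Ts: "\<And>i. i < length S \<Longrightarrow> fVobj T (Dom T (S!i)) (Ts!i)"
    and lift: "factors_through (fcoprod T S Ts) g n x"
  shows "\<exists>i m. i < length S \<and> m < length (Ts!i) \<and> n = block_pos (map length Ts) i m \<and>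
    factors_through S g i (Comp T (Ts!i!m) x) \<and> factors_through (Ts!i) (Comp T (Ts!i!m) x) m x"
proof -
  have "n < sum_list (map length Ts)"
    using lift length_fcoprod[OF l, of T] unfolding factors_through_def by simp
  then obtain i m where "i < length (map length Ts)" "m < map length Ts ! i"
    and n: "n = block_pos (map length Ts) i m"
    using block_pos_surj by blast
  then have im: "i < length S" "m < length (Ts!i)" using l by auto
  have ht: "hom (Ts!i!m) (Dom T (Ts!i!m)) (Dom T (S!i))" using fVobj_hom[OF Ts[OF im(1)] im(2)] .
  have hs: "hom (S!i) (Dom T (S!i)) V" using fVobj_hom[OF S im(1)] .
  have "fcoprod T S Ts ! n = Comp T (S!i) (Ts!i!m)" using nth_fcoprod[OF l im] n by simp
  then have hx: "hom x (Dom T g) (Dom T (Ts!i!m))" and e: "Comp T (Comp T (S!i) (Ts!i!m)) x = g"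
    using lift comp_hom[OF ht hs] unfolding factors_through_def by (auto simp: hom_def)
  have "Comp T (S!i) (Comp T (Ts!i!m) x) = g" using assoc[OF hx ht hs] e by simp
  moreover have "Dom T (Comp T (Ts!i!m) x) = Dom T g" using comp_hom[OF hx ht] by (simp add: hom_def)
  ultimately show ?thesis
    using im n hx comp_hom[OF hx ht] by (intro exI[of _ i] exI[of _ m]) (simp add: factors_through_def)
qed

lemma separated_fcoprod:
  assumes S: "fVobj T V S" "separated F S" and l: "length Ts = length S"
    and Ts: "\<And>i. i < length S \<Longrightarrow> fVobj T (Dom T (S!i)) (Ts!i) \<and> separated F (Ts!i)"
  shows "separated F (fcoprod T S Ts)"
proof (rule separatedI)
  fix g n1 x1 n2 x2
  assume g: "g \<in> Arr T" and l1: "factors_through (fcoprod T S Ts) g n1 x1"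
    and l2: "factors_through (fcoprod T S Ts) g n2 x2" and ne: "(n1, x1) \<noteq> (n2, x2)"
  obtain i1 m1 where d1: "i1 < length S" "n1 = block_pos (map length Ts) i1 m1"
    "factors_through S g i1 (Comp T (Ts!i1!m1) x1)" "factors_through (Ts!i1) (Comp T (Ts!i1!m1) x1) m1 x1"
    using factors_through_fcoprod[OF S(1) l _ l1] Ts by blast
  obtain i2 m2 where d2: "i2 < length S" "n2 = block_pos (map length Ts) i2 m2"
    "factors_through S g i2 (Comp T (Ts!i2!m2) x2)" "factors_through (Ts!i2) (Comp T (Ts!i2!m2) x2) m2 x2"
    using factors_through_fcoprod[OF S(1) l _ l2] Ts by blast
  show "Dom T g \<in> F"
  proof (cases "(i1, Comp T (Ts!i1!m1) x1) = (i2, Comp T (Ts!i2!m2) x2)")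
    case False
    then show ?thesis using separatedD[OF S(2) g d1(3) d2(3)] by simp
  next
    case True
    then have i: "i2 = i1" and c: "Comp T (Ts!i2!m2) x2 = Comp T (Ts!i1!m1) x1" by auto
    have "factors_through (Ts!i1) (Comp T (Ts!i1!m1) x1) m2 x2" using d2(4) i c by simp
    moreover have "(m1, x1) \<noteq> (m2, x2)" using ne d1(2) d2(2) i by auto
    moreover have "hom (Comp T (Ts!i1!m1) x1) (Dom T g) (Dom T (S!i1))"
      using d1(3) unfolding factors_through_def by blast
    ultimately show ?thesis
      using separatedD[OF conjunct2[OF Ts[OF d1(1)]] _ d1(4)] by (auto simp: hom_def)
  qed
qed

lemma uni_wIndSys_nabla_radj: "uni_wIndSys T (nabla_radj F)"
proof -
  have "full_tsubcat T (nabla_radj F)"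
    unfolding full_tsubcat_def
  proof (intro conjI ballI allI impI)
    fix V S S' assume "S \<in> nabla_radj F V" "fVobj T V S' \<and> fV_iso T S S'"
    then show "S' \<in> nabla_radj F V" unfolding nabla_radj_iff using separated_fV_iso by blast
  next
    fix g S P assume g: "g \<in> Arr T" and "S \<in> nabla_radj F (Cod T g)"
      and P: "fVobj T (Dom T g) P \<and> is_restriction T g S P"
    then have S: "fVobj T (Cod T g) S" "separated F S" unfolding nabla_radj_iff by auto
    obtain q where q: "restriction_data T g S P q" using restriction_data_exists[OF g S(1)] P by blast
    show "P \<in> nabla_radj F (Dom T g)"
      using restriction_data.separated_restriction[OF q S(2)] P unfolding nabla_radj_iff by blast
  qed (auto simp: nabla_radj_def)
  moreover have "[Idt T V] \<in> nabla_radj F V" "[] \<in> nabla_radj F V" if "V \<in> Obj T" for V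
    using that fVobj_replicate_id[OF that, of 1] separated_singleton_id
    by (auto simp: nabla_radj_iff fVobj_def separated_def factors_through_def)
  moreover have "fcoprod T S Ts \<in> nabla_radj F V"
    if "S \<in> nabla_radj F V" "length Ts = length S \<and> (\<forall>i<length S. Ts!i \<in> nabla_radj F (Dom T (S!i)))"
    for V S Ts
  proof -
    from that have S: "fVobj T V S" "separated F S" and l: "length Ts = length S"
      and Ts: "\<And>i. i < length S \<Longrightarrow> fVobj T (Dom T (S!i)) (Ts!i) \<and> separated F (Ts!i)"
      unfolding nabla_radj_iff by auto
    show ?thesis
      unfolding nabla_radj_iff using separated_fcoprod[OF S l Ts] fVobj_fcoprod[OF S(1) l] Ts by blast
  qed
  moreover have "S \<in> nabla_radj F V \<and> S' \<in> nabla_radj F V" if "S @ S' \<in> nabla_radj F V" for V S S'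
    using that separated_appendD unfolding nabla_radj_iff fVobj_append by blast
  ultimately show ?thesis unfolding uni_wIndSys_def wIndSys_def by blast
qed

lemma nabla_u_nabla_radj:
  assumes F: "is_family T F"
  shows "nabla_u T (nabla_radj F) = F"
proof -
  have "separated F (replicate 2 (Idt T V)) \<longleftrightarrow> V \<in> F" if V: "V \<in> Obj T" for V
  proof
    have "factors_through (replicate 2 (Idt T V)) (Idt T V) i (Idt T V)" if "i < 2" for i
      using that V id_left[OF id_hom[OF V]] by (auto simp: factors_through_def)
    moreover assume "separated F (replicate 2 (Idt T V))"
    ultimately show "V \<in> F"
      using separatedD[of F _ "Idt T V" 0 "Idt T V" 1 "Idt T V"] id_hom[OF V] V by (auto simp: hom_def)
  next
    assume "V \<in> F"
    then show "separated F (replicate 2 (Idt T V))"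
      using F V unfolding separated_def is_family_def factors_through_def hom_def by auto
  qed
  then show ?thesis
    using F fVobj_replicate_id unfolding nabla_u_def nabla_radj_iff is_family_def by auto
qed

end

locale atomic_orbital_category = orbital_category T for T :: "('o, 'm) cat" +
  assumes atomic: "atomic T"
begin

lemma iso_of_section: "hom f A B \<Longrightarrow> hom s B A \<Longrightarrow> Comp T f s = Idt T B \<Longrightarrow> iso f"
  using atomic unfolding atomic_def hom_def by metis

text \<open>Two different lifts of \<open>g : W \<rightarrow> V\<close> through \<open>S\<close> give two different orbits of \<open>Res\<^sub>g S\<close>
  admitting a section; by atomicity both are isomorphisms, so \<open>2 \<cdot> *\<^sub>W \<in> C\<^sub>W\<close>.\<close>

lemma separated_nabla_u:
  assumes u: "uni_wIndSys T C" and S: "S \<in> C V"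
  shows "separated (nabla_u T C) S"
proof (rule separatedI)
  fix g i x j y
  assume g: "g \<in> Arr T" and li: "factors_through S g i x" and lj: "factors_through S g j y"
    and ne: "(i, x) \<noteq> (j, y)"
  let ?W = "Dom T g"
  have W: "?W \<in> Obj T" using arr_obj g by auto
  have SV: "fVobj T V S" using wIndSys_fVobj[OF uni_wIndSys_wIndSys[OF u] S] by blast
  have li': "i < length S" "hom x ?W (Dom T (S!i))" "Comp T (S!i) x = g"
    using li unfolding factors_through_def by auto
  have "Cod T g = V" using comp_hom[OF li'(2) fVobj_hom[OF SV li'(1)]] li'(3) by (simp add: hom_def)
  then have SV': "fVobj T (Cod T g) S" and SC: "S \<in> C (Cod T g)" using SV S by auto
  obtain P q where P: "fVobj T ?W P" "is_restriction T g S P" and q: "restriction_data T g S P q"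
    using restrictionE[OF g SV'] .
  interpret q: restriction_data T g S P q by (rule q)
  have PC: "P \<in> C ?W" using wIndSys_restriction_closed[OF uni_wIndSys_wIndSys[OF u] g SC P] .
  have point: "\<exists>k c. k < length P \<and> hom c ?W (Dom T (P!k)) \<and> fst (q!k) = i \<and>
      Comp T (snd (q!k)) c = x \<and> Comp T (P!k) c = Idt T ?W \<and> iso (P!k)"
    if "factors_through S g i x" for i x
  proof -
    from that have "i < length S" "hom x ?W (Dom T (S!i))" "Comp T (S!i) x = Comp T g (Idt T ?W)"
      using id_right[OF homI[OF g]] unfolding factors_through_def by auto
    then obtain k c where kc: "k < length P" "hom c ?W (Dom T (P!k))" "fst (q!k) = i"
        "Comp T (snd (q!k)) c = x" "Comp T (P!k) c = Idt T ?W"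
      using q.factor[OF W _ _ id_hom[OF W]] by blast
    then show ?thesis using iso_of_section[OF fVobj_hom[OF P(1) kc(1)] kc(2)] by blast
  qed
  obtain k c where kc: "k < length P" "hom c ?W (Dom T (P!k))" "fst (q!k) = i"
      "Comp T (snd (q!k)) c = x" "Comp T (P!k) c = Idt T ?W" "iso (P!k)"
    using point[OF li] by blast
  obtain k' c' where kc': "k' < length P" "hom c' ?W (Dom T (P!k'))" "fst (q!k') = j"
      "Comp T (snd (q!k')) c' = y" "Comp T (P!k') c' = Idt T ?W" "iso (P!k')"
    using point[OF lj] by blast
  have "k \<noteq> k'"
  proof
    assume k: "k = k'"
    have "c = inv (P!k)" "c' = inv (P!k)"
      using section_eq_inv[OF kc(6)] kc kc' fVobj_hom[OF P(1) kc(1)] k by (auto simp: hom_def)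
    then show False using kc kc' ne k by auto
  qed
  then have "replicate 2 (Idt T ?W) \<in> C ?W"
    using uni_wIndSys_two_iso_orbits[OF u PC kc(1) kc'(1) _ kc(6) kc'(6)] by blast
  then show "?W \<in> nabla_u T C" unfolding nabla_u_def using W by simp
qed

lemma nabla_u_le_iff_le_nabla_radj:
  assumes u: "uni_wIndSys T C" and F: "is_family T F"
  shows "nabla_u T C \<subseteq> F \<longleftrightarrow> C \<le> nabla_radj F"
proof
  assume sub: "nabla_u T C \<subseteq> F"
  show "C \<le> nabla_radj F"
  proof (rule le_funI, rule subsetI)
    fix V S assume "S \<in> C V"
    then show "S \<in> nabla_radj F V" unfolding nabla_radj_iff
      using separated_mono[OF sub separated_nabla_u[OF u]] wIndSys_fVobj[OF uni_wIndSys_wIndSys[OF u]]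
      by blast
  qed
next
  assume "C \<le> nabla_radj F"
  then show "nabla_u T C \<subseteq> F" using nabla_u_mono nabla_u_nabla_radj[OF F] by blast
qed

lemma nabla_radj_le_nabla_radj_iff:
  assumes "is_family T F" "is_family T F'"
  shows "nabla_radj F \<le> nabla_radj F' \<longleftrightarrow> F \<subseteq> F'"
  using nabla_u_le_iff_le_nabla_radj[OF uni_wIndSys_nabla_radj assms(2), of F] nabla_u_nabla_radj[OF assms(1)]
  by simp

end

section \<open>The join with \<open>E\<^sub>\<F>\<^sub>' \<F>\<^sup>\<infinity>\<^sub>\<F>\<^sub>'\<close>\<close>

lemma distinct_eq_Nil_or_singleton:
  "distinct xs \<Longrightarrow> (\<And>a b. a \<in> set xs \<Longrightarrow> b \<in> set xs \<Longrightarrow> a = b) \<Longrightarrow> xs = [] \<or> (\<exists>a. xs = [a])"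
  by (cases xs) (auto, metis distinct.simps(2) list.set_intros(1) neq_Nil_conv set_ConsD)

context category
begin

lemma wIndSys_singleton_comp_iso:
  assumes C: "wIndSys T C" and x: "[x] \<in> C B" "hom x A B" and e: "iso e" "Cod T e = A"
  shows "[Comp T x e] \<in> C B"
proof -
  have "fVobj T B [Comp T x e]"
    using comp_hom[OF _ x(2), of e "Dom T e"] iso_arr[OF e(1)] e(2) hom_obj(2)[OF x(2)]
    unfolding fVobj_def hom_def by auto
  then show ?thesis using wIndSys_iso_closed[OF C x(1)] fV_iso_singleton_comp_iso[OF x(2) e] by blast
qed

text \<open>The join \<open>C \<or> E\<^sub>F\<^sub>' \<F>\<^sup>\<infinity>\<^sub>F\<^sub>'\<close>, described orbitwise: \<open>S \<cong> \<Coprod>\<^sup>A\<^sub>U T\<^sub>U\<close> with \<open>A \<in> C\<^sub>V\<close>, where each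
  \<open>T\<^sub>U\<close> is a coproduct of single orbits \<open>[x] \<in> C\<^sub>U\<close> and, for \<open>U \<notin> F'\<close>, is empty or a single
  isomorphism.\<close>

definition join_witness :: "('o, 'm) tsubcat \<Rightarrow> 'o set \<Rightarrow> 'm list \<Rightarrow> 'm list \<Rightarrow>
    (nat \<Rightarrow> nat) \<Rightarrow> (nat \<Rightarrow> 'm) \<Rightarrow> bool" where
  "join_witness C F' A S \<pi> x \<longleftrightarrow> (\<forall>k<length S. \<pi> k < length A \<and>
      hom (x k) (Dom T (S!k)) (Dom T (A!\<pi> k)) \<and> Comp T (A!\<pi> k) (x k) = S!k \<and>
      [x k] \<in> C (Dom T (A!\<pi> k)) \<and>
      (Dom T (A!\<pi> k) \<notin> F' \<longrightarrow> iso (x k) \<and> (\<forall>k'<length S. \<pi> k' = \<pi> k \<longrightarrow> k' = k)))"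

definition join_EF :: "('o, 'm) tsubcat \<Rightarrow> 'o set \<Rightarrow> ('o, 'm) tsubcat" where
  "join_EF C F' V = {S. fVobj T V S \<and> (\<exists>A \<pi> x. A \<in> C V \<and> join_witness C F' A S \<pi> x)}"

lemma join_EF_iff:
  "S \<in> join_EF C F' V \<longleftrightarrow> fVobj T V S \<and> (\<exists>A \<pi> x. A \<in> C V \<and> join_witness C F' A S \<pi> x)"
  unfolding join_EF_def by simp

lemma join_witnessD:
  assumes "join_witness C F' A S \<pi> x" "k < length S"
  shows "\<pi> k < length A" "hom (x k) (Dom T (S!k)) (Dom T (A!\<pi> k))" "Comp T (A!\<pi> k) (x k) = S!k"
    "[x k] \<in> C (Dom T (A!\<pi> k))"
    "Dom T (A!\<pi> k) \<notin> F' \<Longrightarrow> iso (x k)"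
    "Dom T (A!\<pi> k) \<notin> F' \<Longrightarrow> k' < length S \<Longrightarrow> \<pi> k' = \<pi> k \<Longrightarrow> k' = k"
  using assms unfolding join_witness_def by blast+

lemma replicate_id_mem_EFinf: "V \<in> F' \<Longrightarrow> V \<in> Obj T \<Longrightarrow> replicate n (Idt T V) \<in> EFinf T F' V"
  using fVobj_replicate_id fV_iso_replicate_id_iff[OF fVobj_replicate_id] id_iso
  unfolding EFinf_def by auto

lemma le_join_EF:
  assumes u: "uni_wIndSys T C"
  shows "C \<le> join_EF C F'"
proof (rule le_funI, rule subsetI)
  fix V S assume SC: "S \<in> C V"
  have S: "fVobj T V S" using wIndSys_fVobj[OF uni_wIndSys_wIndSys[OF u] SC] by blast
  have "join_witness C F' S S id (\<lambda>k. Idt T (Dom T (S!k)))"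
    unfolding join_witness_def
  proof (intro allI impI)
    fix k assume k: "k < length S"
    have hS: "hom (S!k) (Dom T (S!k)) V" using fVobj_hom[OF S k] .
    have D: "Dom T (S!k) \<in> Obj T" using hom_obj hS by blast
    show "id k < length S \<and> hom (Idt T (Dom T (S!k))) (Dom T (S!k)) (Dom T (S!id k)) \<and>
      Comp T (S!id k) (Idt T (Dom T (S!k))) = S!k \<and> [Idt T (Dom T (S!k))] \<in> C (Dom T (S!id k)) \<and>
      (Dom T (S!id k) \<notin> F' \<longrightarrow> iso (Idt T (Dom T (S!k))) \<and> (\<forall>k'<length S. id k' = id k \<longrightarrow> k' = k))"
      using k id_hom[OF D] hS uni_wIndSys_terminal[OF u D] id_iso[OF D] by simp
  qed
  then show "S \<in> join_EF C F' V" unfolding join_EF_iff using S SC by blast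
qed

lemma EFinf_le_join_EF:
  assumes u: "uni_wIndSys T C"
  shows "EFinf T F' \<le> join_EF C F'"
proof (rule le_funI, rule subsetI)
  fix V S assume "S \<in> EFinf T F' V"
  then have V: "V \<in> F'" "V \<in> Obj T" and S: "fVobj T V S" "\<exists>n. fV_iso T S (replicate n (Idt T V))"
    unfolding EFinf_def by (auto split: if_splits)
  have isos: "\<forall>s\<in>set S. iso s" using S fV_iso_replicate_id_iff[OF S(1)] by blast
  have "join_witness C F' [Idt T V] S (\<lambda>k. 0) (nth S)"
    unfolding join_witness_def
  proof (intro allI impI)
    fix k assume k: "k < length S"
    have hS: "hom (S!k) (Dom T (S!k)) V" using fVobj_hom[OF S(1) k] .
    have "fVobj T V [S!k]" using hS V unfolding fVobj_def hom_def by auto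
    then have "[S!k] \<in> C V" using uni_wIndSys_isos[OF u] isos k by auto
    then show "0 < length [Idt T V] \<and> hom (S!k) (Dom T (S!k)) (Dom T ([Idt T V]!0)) \<and>
      Comp T ([Idt T V]!0) (S!k) = S!k \<and> [S!k] \<in> C (Dom T ([Idt T V]!0)) \<and>
      (Dom T ([Idt T V]!0) \<notin> F' \<longrightarrow> iso (S!k) \<and> (\<forall>k'<length S. (0::nat) = 0 \<longrightarrow> k' = k))"
      using hS V by simp
  qed
  then show "S \<in> join_EF C F' V"
    unfolding join_EF_iff using S uni_wIndSys_terminal[OF u V(2)] by blast
qed

lemma join_witness_reindex:
  assumes w: "join_witness C F' A S \<pi> x"
    and f: "\<And>k. k < length S' \<Longrightarrow> f k < length S \<and> S!(f k) = S'!k" and inj: "inj_on f {..<length S'}"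
  shows "join_witness C F' A S' (\<lambda>k. \<pi> (f k)) (\<lambda>k. x (f k))"
  unfolding join_witness_def
proof (intro allI impI)
  fix k assume k: "k < length S'"
  have fk: "f k < length S" "S!(f k) = S'!k" using f[OF k] by auto
  have "k' = k" if "Dom T (A!\<pi> (f k)) \<notin> F'" "k' < length S'" "\<pi> (f k') = \<pi> (f k)" for k'
    using join_witnessD(6)[OF w fk(1) that(1), of "f k'"] f[of k'] inj k that unfolding inj_on_def by auto
  then show "\<pi> (f k) < length A \<and> hom (x (f k)) (Dom T (S'!k)) (Dom T (A!\<pi> (f k))) \<and>
      Comp T (A!\<pi> (f k)) (x (f k)) = S'!k \<and> [x (f k)] \<in> C (Dom T (A!\<pi> (f k))) \<and>
      (Dom T (A!\<pi> (f k)) \<notin> F' \<longrightarrow> iso (x (f k)) \<and>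
        (\<forall>k'<length S'. \<pi> (f k') = \<pi> (f k) \<longrightarrow> k' = k))"
    using join_witnessD[OF w fk(1)] fk by auto
qed

lemma join_EF_appendD:
  assumes "S @ S' \<in> join_EF C F' V"
  shows "S \<in> join_EF C F' V \<and> S' \<in> join_EF C F' V"
proof -
  obtain A \<pi> x where S: "fVobj T V (S @ S')" and A: "A \<in> C V" and w: "join_witness C F' A (S @ S') \<pi> x"
    using assms unfolding join_EF_iff by blast
  have "join_witness C F' A S (\<lambda>k. \<pi> (id k)) (\<lambda>k. x (id k))"
    by (rule join_witness_reindex[OF w]) (auto simp: nth_append)
  moreover have "join_witness C F' A S' (\<lambda>k. \<pi> (length S + k)) (\<lambda>k. x (length S + k))"
    by (rule join_witness_reindex[OF w]) (auto simp: nth_append)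
  ultimately show ?thesis unfolding join_EF_iff using S A fVobj_append by blast
qed

lemma join_EF_iso_closed:
  assumes u: "uni_wIndSys T C" and S: "S \<in> join_EF C F' V" and S': "fVobj T V S'"
    and iso: "fV_iso T S S'"
  shows "S' \<in> join_EF C F' V"
proof -
  obtain A \<pi> x where A: "A \<in> C V" and w: "join_witness C F' A S \<pi> x"
    using S unfolding join_EF_iff by blast
  obtain \<sigma> \<phi> where \<sigma>: "bij_betw \<sigma> {..<length S} {..<length S'}" and
    \<phi>: "\<forall>i<length S. iso (\<phi> i) \<and> Dom T (\<phi> i) = Dom T (S!i) \<and>
        Cod T (\<phi> i) = Dom T (S'!(\<sigma> i)) \<and> Comp T (S'!(\<sigma> i)) (\<phi> i) = S!i"
    using iso unfolding fV_iso_def by auto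
  define \<rho> where "\<rho> = the_inv_into {..<length S} \<sigma>"
  have \<rho>: "\<rho> k < length S" "\<sigma> (\<rho> k) = k" if "k < length S'" for k
    using the_inv_into_into[of \<sigma> "{..<length S}" k] f_the_inv_into_f[of \<sigma> "{..<length S}" k] \<sigma> that
    unfolding \<rho>_def bij_betw_def by auto
  have AV: "fVobj T V A" using wIndSys_fVobj[OF uni_wIndSys_wIndSys[OF u] A] by blast
  have "join_witness C F' A S' (\<lambda>k. \<pi> (\<rho> k)) (\<lambda>k. Comp T (x (\<rho> k)) (inv (\<phi> (\<rho> k))))"
    unfolding join_witness_def
  proof (intro allI impI)
    fix k assume k: "k < length S'"
    let ?i = "\<rho> k"
    have i: "?i < length S" "\<sigma> ?i = k" using \<rho> k by auto
    have ip: "iso (\<phi> ?i)" using \<phi> i by auto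
    have hp: "hom (\<phi> ?i) (Dom T (S!?i)) (Dom T (S'!k))" using \<phi> i iso_arr[OF ip] by (auto simp: hom_def)
    have hi: "hom (inv (\<phi> ?i)) (Dom T (S'!k)) (Dom T (S!?i))" using inv_hom[OF ip] hp by (auto simp: hom_def)
    have hx: "hom (x ?i) (Dom T (S!?i)) (Dom T (A!\<pi> ?i))" using join_witnessD(2)[OF w i(1)] .
    have hA: "hom (A!\<pi> ?i) (Dom T (A!\<pi> ?i)) V" using fVobj_hom[OF AV join_witnessD(1)[OF w i(1)]] .
    have phi: "S!?i = Comp T (S'!k) (\<phi> ?i)" using \<phi> i by auto
    have "Comp T (A!\<pi> ?i) (Comp T (x ?i) (inv (\<phi> ?i))) = Comp T (Comp T (S'!k) (\<phi> ?i)) (inv (\<phi> ?i))"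
      using assoc[OF hi hx hA] join_witnessD(3)[OF w i(1)] phi by simp
    also have "\<dots> = S'!k"
      using assoc[OF hi hp fVobj_hom[OF S' k]] comp_inv[OF ip] hp fVobj_hom[OF S' k] by (auto simp: hom_def)
    finally have e: "Comp T (A!\<pi> ?i) (Comp T (x ?i) (inv (\<phi> ?i))) = S'!k" .
    have c: "[Comp T (x ?i) (inv (\<phi> ?i))] \<in> C (Dom T (A!\<pi> ?i))"
      using wIndSys_singleton_comp_iso[OF uni_wIndSys_wIndSys[OF u] join_witnessD(4)[OF w i(1)] hx
          inv_iso[OF ip]] hi by (simp add: hom_def)
    have "iso (Comp T (x ?i) (inv (\<phi> ?i))) \<and> (\<forall>k'<length S'. \<pi> (\<rho> k') = \<pi> ?i \<longrightarrow> k' = k)"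
      if nF: "Dom T (A!\<pi> ?i) \<notin> F'"
      using comp_iso[OF inv_iso[OF ip] join_witnessD(5)[OF w i(1) nF]] inv_hom[OF ip] hx hp
        join_witnessD(6)[OF w i(1) nF] \<rho> i by (auto simp: hom_def) metis
    then show "\<pi> ?i < length A \<and> hom (Comp T (x ?i) (inv (\<phi> ?i))) (Dom T (S'!k)) (Dom T (A!\<pi> ?i)) \<and>
      Comp T (A!\<pi> ?i) (Comp T (x ?i) (inv (\<phi> ?i))) = S'!k \<and>
      [Comp T (x ?i) (inv (\<phi> ?i))] \<in> C (Dom T (A!\<pi> ?i)) \<and>
      (Dom T (A!\<pi> ?i) \<notin> F' \<longrightarrow> iso (Comp T (x ?i) (inv (\<phi> ?i))) \<and>
        (\<forall>k'<length S'. \<pi> (\<rho> k') = \<pi> ?i \<longrightarrow> k' = k))"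
      using join_witnessD(1)[OF w i(1)] comp_hom[OF hi hx] e c by blast
  qed
  then show ?thesis unfolding join_EF_iff using A S' by blast
qed

lemma join_witness_group_mem:
  assumes u: "uni_wIndSys T C" and E: "wIndSys T E" and CE: "C \<le> E" and FE: "EFinf T F' \<le> E"
    and A: "fVobj T V A" and w: "join_witness C F' A S \<pi> x" and j: "j < length A"
  shows "map x (filter (\<lambda>k. \<pi> k = j) [0..<length S]) \<in> E (Dom T (A!j))"
proof -
  let ?U = "Dom T (A!j)" and ?ks = "filter (\<lambda>k. \<pi> k = j) [0..<length S]"
  have U: "?U \<in> Obj T" using hom_obj fVobj_hom[OF A j] by blast
  have single: "[x k] \<in> E ?U" if "k \<in> set ?ks" for k
    using join_witnessD(4)[OF w] that CE by (auto simp: le_fun_def)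
  show ?thesis
  proof (cases "?U \<in> F'")
    case False
    have "?ks = [] \<or> (\<exists>k. ?ks = [k])"
      by (rule distinct_eq_Nil_or_singleton) (use join_witnessD(6)[OF w] False in auto)
    then show ?thesis
    proof
      assume "?ks = []"
      then show ?thesis using uni_wIndSys_empty[OF u U] CE by (auto simp: le_fun_def)
    next
      assume "\<exists>k. ?ks = [k]"
      then obtain k where "?ks = [k]" by blast
      then show ?thesis using single[of k] by simp
    qed
  next
    case True
    let ?m = "length ?ks"
    have "replicate ?m (Idt T ?U) \<in> EFinf T F' ?U" using replicate_id_mem_EFinf True U .
    then have "fcoprod T (replicate ?m (Idt T ?U)) (map (\<lambda>y. [y]) (map x ?ks)) \<in> E ?U"
    proof (intro wIndSys_fcoprod_closed[OF E])
      show "replicate ?m (Idt T ?U) \<in> EFinf T F' ?U \<Longrightarrow> replicate ?m (Idt T ?U) \<in> E ?U"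
        using FE by (auto simp: le_fun_def)
    qed (use single[OF nth_mem] U in auto)
    moreover have "fcoprod T (replicate ?m (Idt T ?U)) (map (\<lambda>y. [y]) (map x ?ks)) =
        map (Comp T (Idt T ?U)) (map x ?ks)"
      by (rule fcoprod_replicate_singletons) simp
    moreover have "map (Comp T (Idt T ?U)) (map x ?ks) = map x ?ks"
      using id_left[OF join_witnessD(2)[OF w]] by (auto intro!: map_idI)
    ultimately show ?thesis by metis
  qed
qed

lemma join_EF_le:
  assumes u: "uni_wIndSys T C" and E: "wIndSys T E" and CE: "C \<le> E" and FE: "EFinf T F' \<le> E"
  shows "join_EF C F' \<le> E"
proof (rule le_funI, rule subsetI)
  fix V S assume "S \<in> join_EF C F' V"
  then obtain A \<pi> x where S: "fVobj T V S" and A: "A \<in> C V" and w: "join_witness C F' A S \<pi> x"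
    unfolding join_EF_iff by blast
  let ?ks = "\<lambda>j. filter (\<lambda>k. \<pi> k = j) [0..<length S]"
  have AV: "fVobj T V A" using wIndSys_fVobj[OF uni_wIndSys_wIndSys[OF u] A] by blast
  have wit: "\<forall>k<length S. \<pi> k < length A \<and> Comp T (A!\<pi> k) (x k) = S!k"
    using join_witnessD(1,3)[OF w] by blast
  have mem: "fcoprod T A (map (\<lambda>j. map x (?ks j)) [0..<length A]) \<in> E V"
    by (rule wIndSys_fcoprod_closed[OF E])
      (use A CE join_witness_group_mem[OF u E CE FE AV w] in \<open>auto simp: le_fun_def\<close>)
  define L where "L = concat (map ?ks [0..<length A])"
  have "distinct L \<and> set L = {k. k < length S \<and> \<pi> k < length A}"
    unfolding L_def by (rule grouped_indices)
  moreover have "{k. k < length S \<and> \<pi> k < length A} = {..<length S}" using wit by auto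
  ultimately have "fV_iso T (map (nth S) L) S" using fV_iso_permute[OF S] by simp
  then show "S \<in> E V"
    using wIndSys_iso_closed[OF E mem S] fcoprod_grouped[OF wit] unfolding L_def by simp
qed

end

context atomic_orbital_category
begin

text \<open>Orbitwise pasting of pullbacks: if the orbit \<open>P!k\<close> of \<open>Res\<^sub>g S\<close> maps by \<open>c\<close> to \<open>a'\<close>, where
  \<open>(a, a')\<close> is a square over \<open>(b, g)\<close> and \<open>S!i\<close> factors through \<open>b\<close> by \<open>u\<close>, then \<open>c\<close> is, up to
  an isomorphism, an orbit of \<open>Res\<^sub>a [u]\<close>. Atomicity turns the comparison map into an isomorphism.\<close>

lemma restriction_pasting:
  assumes q: "restriction_data T g S P q" and k: "k < length P"
    and b: "hom b B (Cod T g)" and u: "hom u (Dom T (S!fst (q!k))) B" and bu: "Comp T b u = S!fst (q!k)"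
    and a: "hom a D B" and a': "hom a' D (Dom T g)" and ba: "Comp T b a = Comp T g a'"
    and c: "hom c (Dom T (P!k)) D" and ac: "Comp T a c = Comp T u (snd (q!k))"
    and a'c: "Comp T a' c = P!k"
    and z: "restriction_data T a [u] Z qz"
  shows "\<exists>z e d. z < length Z \<and> hom e (Dom T (P!k)) (Dom T (Z!z)) \<and> iso e \<and> Comp T (Z!z) e = c \<and>
    hom d (Dom T (Z!z)) (Dom T (P!k)) \<and> Comp T (snd (q!k)) d = snd (qz!z) \<and>
    Comp T (P!k) d = Comp T a' (Z!z)"
proof -
  interpret q: restriction_data T g S P q by (rule q)
  interpret z: restriction_data T a "[u]" Z qz by (rule z)
  let ?i = "fst (q!k)" and ?r = "snd (q!k)"
  have ck: "?i < length S" "hom ?r (Dom T (P!k)) (Dom T (S!?i))" "Comp T (S!?i) ?r = Comp T g (P!k)"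
    using q.cone[OF k] by auto
  have hP: "hom (P!k) (Dom T (P!k)) (Dom T g)" using fVobj_hom[OF q.restr k] .
  have D: "Dom T (P!k) \<in> Obj T" using hom_obj hP by blast
  have hg: "hom g (Dom T g) (Cod T g)" using q.arr by auto
  obtain z e where ze: "z < length Z" "hom e (Dom T (P!k)) (Dom T (Z!z))" "fst (qz!z) = 0"
      "Comp T (snd (qz!z)) e = ?r" "Comp T (Z!z) e = c"
    using z.factor[OF D, of 0 ?r c] ck(2) c u ac a by (auto simp: hom_def)
  let ?w = "snd (qz!z)"
  have hZ: "hom (Z!z) (Dom T (Z!z)) D" using fVobj_hom[OF z.restr ze(1)] a by (simp add: hom_def)
  have cz: "hom ?w (Dom T (Z!z)) (Dom T (S!?i))" "Comp T u ?w = Comp T a (Z!z)"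
    using z.cone[OF ze(1)] ze(3) u by (auto simp: hom_def)
  have "Comp T (S!?i) ?w = Comp T b (Comp T a (Z!z))" using assoc[OF cz(1) u b] bu cz(2) by simp
  also have "\<dots> = Comp T g (Comp T a' (Z!z))" using assoc[OF hZ a b] assoc[OF hZ a' hg] ba by simp
  finally obtain k2 d where kd: "k2 < length P" "hom d (Dom T (Z!z)) (Dom T (P!k2))" "fst (q!k2) = ?i"
      "Comp T (snd (q!k2)) d = ?w" "Comp T (P!k2) d = Comp T a' (Z!z)"
    using q.factor[OF hom_obj(1)[OF hZ] ck(1) cz(1) comp_hom[OF hZ a']] by blast
  have ck2: "hom (snd (q!k2)) (Dom T (P!k2)) (Dom T (S!?i))" using q.cone[OF kd(1)] kd(3) by auto
  have hP2: "hom (P!k2) (Dom T (P!k2)) (Dom T g)" using fVobj_hom[OF q.restr kd(1)] .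
  have e1: "Comp T (snd (q!k2)) (Comp T d e) = ?r" using assoc[OF ze(2) kd(2) ck2] kd(4) ze(4) by simp
  have e2: "Comp T (P!k2) (Comp T d e) = P!k"
    using assoc[OF ze(2) kd(2) hP2] kd(5) assoc[OF ze(2) hZ a'] ze(5) a'c by simp
  have "k = k2 \<and> Idt T (Dom T (P!k)) = Comp T d e"
    by (rule q.factor_unique[OF k kd(1) id_hom[OF D] comp_hom[OF ze(2) kd(2)]])
      (use kd(3) e1 e2 ck(2) hP in auto)
  then have kk: "k2 = k" and de: "Comp T d e = Idt T (Dom T (P!k))" by auto
  have hd: "hom d (Dom T (Z!z)) (Dom T (P!k))" using kd(2) kk by simp
  have "iso d" using iso_of_section[OF hd ze(2) de] .
  then have "iso e" using section_eq_inv[of d e] inv_iso ze(2) hd de by (auto simp: hom_def)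
  then show ?thesis using ze(1,2,5) hd kd(4,5) kk by blast
qed

end

text \<open>Restricting \<open>S\<close>, which lies over \<open>A\<close>, along \<open>g\<close>: each orbit of \<open>Res\<^sub>g S\<close> lifts to an orbit
  of \<open>Res\<^sub>g A \<in> C\<close>, and the lift lies in \<open>C\<close> by pasting.\<close>

locale join_restriction =
  atomic_orbital_category T + q: restriction_data T g S P q + qa: restriction_data T g A A' qa
  for T :: "('o, 'm) cat" and g S P q A A' qa +
  fixes C :: "('o, 'm) tsubcat" and F' :: "'o set" and \<pi> :: "nat \<Rightarrow> nat" and x :: "nat \<Rightarrow> 'm"
  assumes uni: "uni_wIndSys T C" and family: "is_family T F'"
    and witness: "join_witness C F' A S \<pi> x"
begin

definition lifts :: "nat \<Rightarrow> nat \<Rightarrow> 'm \<Rightarrow> bool" where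
  "lifts k k' c \<longleftrightarrow> k' < length A' \<and> hom c (Dom T (P!k)) (Dom T (A'!k')) \<and>
     fst (qa!k') = \<pi> (fst (q!k)) \<and> Comp T (snd (qa!k')) c = Comp T (x (fst (q!k))) (snd (q!k)) \<and>
     Comp T (A'!k') c = P!k"

lemma lifts_exist:
  assumes k: "k < length P"
  shows "\<exists>k' c. lifts k k' c"
proof -
  let ?i = "fst (q!k)" and ?r = "snd (q!k)"
  have ck: "?i < length S" "hom ?r (Dom T (P!k)) (Dom T (S!?i))" "Comp T (S!?i) ?r = Comp T g (P!k)"
    using q.cone[OF k] by auto
  have hx: "hom (x ?i) (Dom T (S!?i)) (Dom T (A!\<pi> ?i))" using join_witnessD(2)[OF witness ck(1)] .
  have j: "\<pi> ?i < length A" using join_witnessD(1)[OF witness ck(1)] .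
  have hA: "hom (A!\<pi> ?i) (Dom T (A!\<pi> ?i)) (Cod T g)" using fVobj_hom[OF qa.base j] .
  have hP: "hom (P!k) (Dom T (P!k)) (Dom T g)" using fVobj_hom[OF q.restr k] .
  have "Comp T (A!\<pi> ?i) (Comp T (x ?i) ?r) = Comp T g (P!k)"
    using assoc[OF ck(2) hx hA] join_witnessD(3)[OF witness ck(1)] ck(3) by simp
  then show ?thesis
    using qa.factor[OF hom_obj(1)[OF hP] j comp_hom[OF ck(2) hx] hP] unfolding lifts_def by blast
qed

lemma lifts_restriction_exists:
  assumes k: "k < length P" and l: "lifts k k' c"
  shows "\<exists>Z qz. Z \<in> C (Dom T (A'!k')) \<and> restriction_data T (snd (qa!k')) [x (fst (q!k))] Z qz"
proof -
  let ?i = "fst (q!k)" and ?a = "snd (qa!k')"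
  have i: "?i < length S" using q.cone[OF k] by auto
  have kc: "k' < length A'" "fst (qa!k') = \<pi> ?i" using l unfolding lifts_def by auto
  have hx: "hom (x ?i) (Dom T (S!?i)) (Dom T (A!\<pi> ?i))" using join_witnessD(2)[OF witness i] .
  have a: "?a \<in> Arr T" "Dom T ?a = Dom T (A'!k')" "Cod T ?a = Dom T (A!\<pi> ?i)"
    using qa.cone[OF kc(1)] kc(2) by (auto simp: hom_def)
  have xV: "fVobj T (Cod T ?a) [x ?i]" using hx hom_obj(2)[OF hx] a unfolding fVobj_def hom_def by auto
  obtain Z qz where Z: "fVobj T (Dom T ?a) Z" "is_restriction T ?a [x ?i] Z"
      and qz: "restriction_data T ?a [x ?i] Z qz"
    using restrictionE[OF a(1) xV] .
  have "Z \<in> C (Dom T (A'!k'))"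
    using wIndSys_restriction_closed[OF uni_wIndSys_wIndSys[OF uni] a(1) _ Z] join_witnessD(4)[OF witness i] a
    by simp
  then show ?thesis using qz by blast
qed

lemma lifts_pasting:
  assumes k: "k < length P" and l: "lifts k k' c"
    and qz: "restriction_data T (snd (qa!k')) [x (fst (q!k))] Z qz"
  shows "\<exists>z e d. z < length Z \<and> hom e (Dom T (P!k)) (Dom T (Z!z)) \<and> iso e \<and> Comp T (Z!z) e = c \<and>
    hom d (Dom T (Z!z)) (Dom T (P!k)) \<and> Comp T (snd (q!k)) d = snd (qz!z) \<and>
    Comp T (P!k) d = Comp T (A'!k') (Z!z)"
proof -
  let ?i = "fst (q!k)" and ?a = "snd (qa!k')"
  have i: "?i < length S" using q.cone[OF k] by auto
  have kc: "k' < length A'" "hom c (Dom T (P!k)) (Dom T (A'!k'))" "fst (qa!k') = \<pi> ?i"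
    "Comp T ?a c = Comp T (x ?i) (snd (q!k))" "Comp T (A'!k') c = P!k"
    using l unfolding lifts_def by auto
  have j: "\<pi> ?i < length A" using join_witnessD(1)[OF witness i] .
  have ca: "hom ?a (Dom T (A'!k')) (Dom T (A!\<pi> ?i))" "Comp T (A!\<pi> ?i) ?a = Comp T g (A'!k')"
    using qa.cone[OF kc(1)] kc(3) by auto
  show ?thesis
    by (rule restriction_pasting[OF q.restriction_data_axioms k fVobj_hom[OF qa.base j]
          join_witnessD(2,3)[OF witness i] ca(1) fVobj_hom[OF qa.restr kc(1)] ca(2) kc(2) kc(4) kc(5) qz])
qed

lemma lifts_mem:
  assumes k: "k < length P" and l: "lifts k k' c"
  shows "[c] \<in> C (Dom T (A'!k'))"
proof -
  obtain Z qz where Z: "Z \<in> C (Dom T (A'!k'))" and qz: "restriction_data T (snd (qa!k')) [x (fst (q!k))] Z qz"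
    using lifts_restriction_exists[OF k l] by blast
  obtain z e where ze: "z < length Z" "hom e (Dom T (P!k)) (Dom T (Z!z))" "iso e" "Comp T (Z!z) e = c"
    using lifts_pasting[OF k l qz] by blast
  have hZ: "hom (Z!z) (Dom T (Z!z)) (Dom T (A'!k'))"
    using fVobj_hom[OF restriction_data.restr[OF qz] ze(1)] qa.cone l unfolding lifts_def by (auto simp: hom_def)
  show ?thesis
    using wIndSys_singleton_comp_iso[OF uni_wIndSys_wIndSys[OF uni] uni_wIndSys_orbit[OF uni Z ze(1)] hZ ze(3)]
      ze(2,4) by (simp add: hom_def)
qed

lemma lifts_iso_unique:
  assumes k: "k < length P" and l: "lifts k k' c" and nF: "Dom T (A'!k') \<notin> F'"
  shows "iso c" and "k2 < length P \<Longrightarrow> lifts k2 k' c2 \<Longrightarrow> k2 = k"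
proof -
  let ?i = "fst (q!k)" and ?a = "snd (qa!k')"
  have i: "?i < length S" using q.cone[OF k] by auto
  have kc: "k' < length A'" "fst (qa!k') = \<pi> ?i" using l unfolding lifts_def by auto
  have nF2: "Dom T (A!\<pi> ?i) \<notin> F'"
    using qa.cone[OF kc(1)] kc(2) nF family unfolding is_family_def hom_def by auto
  obtain Z qz where qz: "restriction_data T ?a [x ?i] Z qz"
    using lifts_restriction_exists[OF k l] by blast
  obtain z e d where zed: "z < length Z" "hom e (Dom T (P!k)) (Dom T (Z!z))" "iso e" "Comp T (Z!z) e = c"
      "hom d (Dom T (Z!z)) (Dom T (P!k))" "Comp T (snd (q!k)) d = snd (qz!z)"
      "Comp T (P!k) d = Comp T (A'!k') (Z!z)"
    using lifts_pasting[OF k l qz] by blast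
  have "(\<forall>p\<in>set Z. iso p) \<and> length Z = 1"
    using restriction_data.restriction_of_isos[OF qz] join_witnessD(5)[OF witness i nF2] by simp
  then have Zi: "iso (Z!z)" and Z1: "length Z = 1" using zed(1) by auto
  show "iso c" using comp_iso[OF zed(3) Zi] zed(2,4) by (simp add: hom_def)
  assume k2: "k2 < length P" and l2: "lifts k2 k' c2"
  have "fst (qa!k') = \<pi> (fst (q!k2))" using l2 unfolding lifts_def by auto
  then have ii: "fst (q!k2) = ?i"
    using join_witnessD(6)[OF witness i nF2] q.cone[OF k2] kc(2) by auto
  obtain z2 e2 d2 where zed2: "z2 < length Z" "hom d2 (Dom T (Z!z2)) (Dom T (P!k2))"
      "Comp T (snd (q!k2)) d2 = snd (qz!z2)" "Comp T (P!k2) d2 = Comp T (A'!k') (Z!z2)"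
    using lifts_pasting[OF k2 l2] qz ii by metis
  have "z2 = z" using zed2(1) zed(1) Z1 by simp
  then show "k2 = k"
    using q.factor_unique[OF k2 k _ zed(5), of d2] zed2 zed(6,7) ii by simp
qed

lemma restricted_join_witness: "\<exists>\<pi>' x'. join_witness C F' A' P \<pi>' x'"
proof -
  obtain \<pi>' x' where l: "\<And>k. k < length P \<Longrightarrow> lifts k (\<pi>' k) (x' k)"
    using lifts_exist by metis
  have "join_witness C F' A' P \<pi>' x'"
    unfolding join_witness_def
  proof (intro allI impI)
    fix k assume k: "k < length P"
    have "k2 = k" if "Dom T (A'!\<pi>' k) \<notin> F'" "k2 < length P" "\<pi>' k2 = \<pi>' k" for k2
      using lifts_iso_unique(2)[OF k l[OF k] that(1,2)] l[OF that(2)] that(3) by simp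
    then show "\<pi>' k < length A' \<and> hom (x' k) (Dom T (P!k)) (Dom T (A'!\<pi>' k)) \<and>
        Comp T (A'!\<pi>' k) (x' k) = P!k \<and> [x' k] \<in> C (Dom T (A'!\<pi>' k)) \<and>
        (Dom T (A'!\<pi>' k) \<notin> F' \<longrightarrow> iso (x' k) \<and> (\<forall>k2<length P. \<pi>' k2 = \<pi>' k \<longrightarrow> k2 = k))"
      using l[OF k] lifts_mem[OF k l[OF k]] lifts_iso_unique(1)[OF k l[OF k]] unfolding lifts_def by blast
  qed
  then show ?thesis by blast
qed

end

context atomic_orbital_category
begin

lemma join_EF_restriction_closed:
  assumes u: "uni_wIndSys T C" and F': "is_family T F'" and g: "g \<in> Arr T"
    and S: "S \<in> join_EF C F' (Cod T g)" and P: "fVobj T (Dom T g) P" "is_restriction T g S P"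
  shows "P \<in> join_EF C F' (Dom T g)"
proof -
  obtain A \<pi> x where SV: "fVobj T (Cod T g) S" and A: "A \<in> C (Cod T g)"
    and w: "join_witness C F' A S \<pi> x"
    using S unfolding join_EF_iff by blast
  have AV: "fVobj T (Cod T g) A" using wIndSys_fVobj[OF uni_wIndSys_wIndSys[OF u] A] by blast
  obtain q where q: "restriction_data T g S P q" using restriction_data_exists[OF g SV P] by blast
  obtain A' qa where A': "fVobj T (Dom T g) A'" "is_restriction T g A A'"
    and qa: "restriction_data T g A A' qa"
    using restrictionE[OF g AV] .
  have "join_restriction T g S P q A A' qa C F' \<pi> x"
    unfolding join_restriction_def join_restriction_axioms_def
    using atomic_orbital_category_axioms q qa u F' w by blast
  from join_restriction.restricted_join_witness[OF this]
  obtain \<pi>' x' where "join_witness C F' A' P \<pi>' x'" by blast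
  moreover have "A' \<in> C (Dom T g)"
    using wIndSys_restriction_closed[OF uni_wIndSys_wIndSys[OF u] g A A'] .
  ultimately show ?thesis unfolding join_EF_iff using P by blast
qed

end

text \<open>Coproducts in \<open>C \<or> E\<^sub>F\<^sub>'\<close>: given \<open>S\<close> over \<open>A\<close> and each \<open>Ts!i\<close> over \<open>B i\<close>, the coproduct of
  \<open>Ts\<close> over \<open>S\<close> lies over the coproduct of \<open>A\<close> with summands \<open>x i \<circ> B i\<close> at the orbits of \<open>A\<close>
  outside \<open>F'\<close> (there at most one orbit \<open>i\<close> of \<open>S\<close> lies over it) and \<open>*\<close> at all other orbits.\<close>

locale join_coproduct = category T for T :: "('o, 'm) cat" +
  fixes C :: "('o, 'm) tsubcat" and F' :: "'o set" and V :: 'o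
    and S A :: "'m list" and Ts :: "'m list list" and \<pi> :: "nat \<Rightarrow> nat" and x :: "nat \<Rightarrow> 'm"
    and B :: "nat \<Rightarrow> 'm list" and \<rho> :: "nat \<Rightarrow> nat \<Rightarrow> nat" and y :: "nat \<Rightarrow> nat \<Rightarrow> 'm"
  assumes uni: "uni_wIndSys T C"
    and S: "fVobj T V S" and A: "A \<in> C V" and witness: "join_witness C F' A S \<pi> x"
    and length_Ts: "length Ts = length S"
    and Ts: "\<And>i. i < length S \<Longrightarrow> fVobj T (Dom T (S!i)) (Ts!i)"
    and B: "\<And>i. i < length S \<Longrightarrow> B i \<in> C (Dom T (S!i))"
    and witness_Ts: "\<And>i. i < length S \<Longrightarrow> join_witness C F' (B i) (Ts!i) (\<rho> i) (y i)"
begin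

definition over :: "nat \<Rightarrow> nat" where
  "over j = (SOME i. i < length S \<and> \<pi> i = j)"

definition Ys :: "'m list list" where
  "Ys = map (\<lambda>j. if Dom T (A!j) \<notin> F' \<and> (\<exists>i<length S. \<pi> i = j)
      then map (Comp T (x (over j))) (B (over j)) else [Idt T (Dom T (A!j))]) [0..<length A]"

definition idx :: "nat \<Rightarrow> nat \<Rightarrow> nat" where
  "idx i l = block_pos (map length Ys) (\<pi> i) (if Dom T (A!\<pi> i) \<notin> F' then \<rho> i l else 0)"

definition map_at :: "nat \<Rightarrow> nat \<Rightarrow> 'm" where
  "map_at i l = (if Dom T (A!\<pi> i) \<notin> F' then y i l else Comp T (x i) (Ts!i!l))"

lemma AV: "fVobj T V A"
  using wIndSys_fVobj[OF uni_wIndSys_wIndSys[OF uni] A] by blast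

lemma length_Ys: "length Ys = length A"
  unfolding Ys_def by simp

lemma Ys_outside:
  assumes i: "i < length S" and nF: "Dom T (A!\<pi> i) \<notin> F'"
  shows "Ys!(\<pi> i) = map (Comp T (x i)) (B i)"
proof -
  have "over (\<pi> i) < length S \<and> \<pi> (over (\<pi> i)) = \<pi> i"
    unfolding over_def by (rule someI[of _ i]) (use i in simp)
  then have "over (\<pi> i) = i" using join_witnessD(6)[OF witness i nF] by blast
  then show ?thesis using i nF join_witnessD(1)[OF witness i] unfolding Ys_def by auto
qed

lemma Ys_inside: "j < length A \<Longrightarrow> Dom T (A!j) \<in> F' \<Longrightarrow> Ys!j = [Idt T (Dom T (A!j))]"
  unfolding Ys_def by auto

lemma Ys_mem:
  assumes j: "j < length A"
  shows "Ys!j \<in> C (Dom T (A!j))"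
proof (cases "Dom T (A!j) \<notin> F' \<and> (\<exists>i<length S. \<pi> i = j)")
  case True
  then obtain i where i: "i < length S" "\<pi> i = j" by blast
  have hx: "hom (x i) (Dom T (S!i)) (Dom T (A!j))" using join_witnessD(2)[OF witness i(1)] i by simp
  have "fcoprod T [x i] [B i] \<in> C (Dom T (A!j))"
    by (rule wIndSys_fcoprod_closed[OF uni_wIndSys_wIndSys[OF uni]])
      (use join_witnessD(4)[OF witness i(1)] i B[OF i(1)] hx in \<open>auto simp: hom_def\<close>)
  then show ?thesis using Ys_outside[OF i(1)] True i by (simp add: fcoprod_singleton)
next
  case False
  have "Dom T (A!j) \<in> Obj T" using hom_obj fVobj_hom[OF AV j] by blast
  then show ?thesis using False j uni_wIndSys_terminal[OF uni] unfolding Ys_def by auto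
qed

lemma base_mem: "fcoprod T A Ys \<in> C V"
  by (rule wIndSys_fcoprod_closed[OF uni_wIndSys_wIndSys[OF uni] A length_Ys]) (use Ys_mem in auto)

lemma idx_outside:
  assumes i: "i < length S" and l: "l < length (Ts!i)" and nF: "Dom T (A!\<pi> i) \<notin> F'"
  shows "idx i l < length (fcoprod T A Ys)"
    and "fcoprod T A Ys ! idx i l = Comp T (A!\<pi> i) (Comp T (x i) (B i ! \<rho> i l))"
proof -
  have j: "\<pi> i < length A" using join_witnessD(1)[OF witness i] .
  have m: "\<rho> i l < length (Ys!\<pi> i)"
    using join_witnessD(1)[OF witness_Ts[OF i] l] Ys_outside[OF i nF] by simp
  show "idx i l < length (fcoprod T A Ys)"
    using block_pos_less[of "\<pi> i" "map length Ys" "\<rho> i l"] length_fcoprod[OF length_Ys, of T] j m nF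
    unfolding idx_def by (simp add: length_Ys)
  show "fcoprod T A Ys ! idx i l = Comp T (A!\<pi> i) (Comp T (x i) (B i ! \<rho> i l))"
    using nth_fcoprod[OF length_Ys j m, of T] Ys_outside[OF i nF] m nF unfolding idx_def by simp
qed

lemma idx_inside:
  assumes i: "i < length S" and F: "Dom T (A!\<pi> i) \<in> F'"
  shows "idx i l < length (fcoprod T A Ys)" and "fcoprod T A Ys ! idx i l = A!\<pi> i"
proof -
  have j: "\<pi> i < length A" using join_witnessD(1)[OF witness i] .
  have Y: "Ys!\<pi> i = [Idt T (Dom T (A!\<pi> i))]" using Ys_inside[OF j F] .
  show "idx i l < length (fcoprod T A Ys)"
    using block_pos_less[of "\<pi> i" "map length Ys" 0] length_fcoprod[OF length_Ys, of T] j Y F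
    unfolding idx_def by (simp add: length_Ys)
  show "fcoprod T A Ys ! idx i l = A!\<pi> i"
    using nth_fcoprod[OF length_Ys j, of 0 T] Y F fVobj_hom[OF AV j] unfolding idx_def by simp
qed

lemma idx_block:
  assumes i: "i < length S" and l: "l < length (Ts!i)"
  shows "\<pi> i < length (map length Ys)"
    and "(if Dom T (A!\<pi> i) \<notin> F' then \<rho> i l else 0) < map length Ys ! \<pi> i"
  using join_witnessD(1)[OF witness i] join_witnessD(1)[OF witness_Ts[OF i] l] Ys_outside[OF i]
    Ys_inside[OF join_witnessD(1)[OF witness i]] length_Ys by auto

lemma idx_eq_imp_over:
  assumes "i < length S" "l < length (Ts!i)" "i2 < length S" "l2 < length (Ts!i2)" "idx i2 l2 = idx i l"
  shows "\<pi> i2 = \<pi> i"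
  using block_pos_inj[OF idx_block[OF assms(3,4)] idx_block[OF assms(1,2)]] assms(5) unfolding idx_def
  by blast

lemma orbit_outside:
  assumes i: "i < length S" and l: "l < length (Ts!i)" and nF: "Dom T (A!\<pi> i) \<notin> F'"
  shows "hom (map_at i l) (Dom T (Ts!i!l)) (Dom T (fcoprod T A Ys ! idx i l)) \<and>
    Comp T (fcoprod T A Ys ! idx i l) (map_at i l) = Comp T (S!i) (Ts!i!l) \<and>
    [map_at i l] \<in> C (Dom T (fcoprod T A Ys ! idx i l)) \<and>
    (Dom T (fcoprod T A Ys ! idx i l) \<notin> F' \<longrightarrow> iso (map_at i l) \<and>
      (\<forall>i2 l2. i2 < length S \<longrightarrow> l2 < length (Ts!i2) \<longrightarrow> idx i2 l2 = idx i l \<longrightarrow> i2 = i \<and> l2 = l))"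
proof -
  let ?j = "\<pi> i" and ?m = "\<rho> i l"
  have wB: "join_witness C F' (B i) (Ts!i) (\<rho> i) (y i)" using witness_Ts[OF i] .
  have BV: "fVobj T (Dom T (S!i)) (B i)" using wIndSys_fVobj[OF uni_wIndSys_wIndSys[OF uni] B[OF i]] by blast
  have m: "?m < length (B i)" using join_witnessD(1)[OF wB l] .
  have hx: "hom (x i) (Dom T (S!i)) (Dom T (A!?j))" using join_witnessD(2)[OF witness i] .
  have hA: "hom (A!?j) (Dom T (A!?j)) V" using fVobj_hom[OF AV join_witnessD(1)[OF witness i]] .
  have hy: "hom (y i l) (Dom T (Ts!i!l)) (Dom T (B i!?m))" using join_witnessD(2)[OF wB l] .
  have hB: "hom (B i!?m) (Dom T (B i!?m)) (Dom T (S!i))" using fVobj_hom[OF BV m] .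
  have An: "fcoprod T A Ys ! idx i l = Comp T (A!?j) (Comp T (x i) (B i!?m))"
    using idx_outside(2)[OF i l nF] .
  have dA: "Dom T (fcoprod T A Ys ! idx i l) = Dom T (B i!?m)"
    using An comp_hom[OF comp_hom[OF hB hx] hA] by (simp add: hom_def)
  have y: "map_at i l = y i l" using nF unfolding map_at_def by simp
  have "Comp T (Comp T (A!?j) (Comp T (x i) (B i!?m))) (y i l) = Comp T (A!?j) (Comp T (x i) (Ts!i!l))"
    using assoc[OF hy comp_hom[OF hB hx] hA] assoc[OF hy hB hx] join_witnessD(3)[OF wB l] by simp
  also have "\<dots> = Comp T (S!i) (Ts!i!l)"
    using assoc[OF fVobj_hom[OF Ts[OF i] l] hx hA] join_witnessD(3)[OF witness i] by simp
  finally have eq: "Comp T (fcoprod T A Ys ! idx i l) (map_at i l) = Comp T (S!i) (Ts!i!l)"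
    using An y by simp
  have unique: "i2 = i \<and> l2 = l"
    if nF': "Dom T (B i!?m) \<notin> F'" and i2: "i2 < length S" "l2 < length (Ts!i2)" "idx i2 l2 = idx i l"
    for i2 l2
  proof -
    have j: "\<pi> i2 = ?j" using idx_eq_imp_over[OF i l i2] .
    then have ii: "i2 = i" using join_witnessD(6)[OF witness i nF i2(1)] by simp
    have "\<rho> i l2 < map length Ys ! ?j" using idx_block(2)[OF i2(1,2)] ii nF by simp
    then have "\<rho> i l2 = ?m"
      using block_pos_inj[OF idx_block(1)[OF i l] _ idx_block(1)[OF i l] idx_block(2)[OF i l]] i2(3) ii nF
      unfolding idx_def by auto
    then show ?thesis using join_witnessD(6)[OF wB l nF'] i2(2) ii by simp
  qed
  show ?thesis
    using hy dA eq y join_witnessD(4,5)[OF wB l] unique by simp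
qed

lemma orbit_inside:
  assumes i: "i < length S" and l: "l < length (Ts!i)" and F: "Dom T (A!\<pi> i) \<in> F'"
  shows "hom (map_at i l) (Dom T (Ts!i!l)) (Dom T (fcoprod T A Ys ! idx i l)) \<and>
    Comp T (fcoprod T A Ys ! idx i l) (map_at i l) = Comp T (S!i) (Ts!i!l) \<and>
    [map_at i l] \<in> C (Dom T (fcoprod T A Ys ! idx i l)) \<and>
    Dom T (fcoprod T A Ys ! idx i l) \<in> F'"
proof -
  let ?j = "\<pi> i" and ?m = "\<rho> i l"
  have wB: "join_witness C F' (B i) (Ts!i) (\<rho> i) (y i)" using witness_Ts[OF i] .
  have hx: "hom (x i) (Dom T (S!i)) (Dom T (A!?j))" using join_witnessD(2)[OF witness i] .
  have hA: "hom (A!?j) (Dom T (A!?j)) V" using fVobj_hom[OF AV join_witnessD(1)[OF witness i]] .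
  have hT: "hom (Ts!i!l) (Dom T (Ts!i!l)) (Dom T (S!i))" using fVobj_hom[OF Ts[OF i] l] .
  have x: "map_at i l = Comp T (x i) (Ts!i!l)" using F unfolding map_at_def by simp
  have "[B i!?m] \<in> C (Dom T (S!i))"
    using uni_wIndSys_orbit[OF uni B[OF i] join_witnessD(1)[OF wB l]] .
  then have "fcoprod T [B i!?m] [[y i l]] \<in> C (Dom T (S!i))"
    by (rule wIndSys_fcoprod_closed[OF uni_wIndSys_wIndSys[OF uni]]) (use join_witnessD(4)[OF wB l] in auto)
  then have "[Ts!i!l] \<in> C (Dom T (S!i))" using join_witnessD(3)[OF wB l] by (simp add: fcoprod_singleton)
  then have "fcoprod T [x i] [[Ts!i!l]] \<in> C (Dom T (A!?j))"
    by (intro wIndSys_fcoprod_closed[OF uni_wIndSys_wIndSys[OF uni] join_witnessD(4)[OF witness i]])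
      (use hx in \<open>auto simp: hom_def\<close>)
  then show ?thesis
    using idx_inside(2)[OF i F] x comp_hom[OF hT hx] assoc[OF hT hx hA] join_witnessD(3)[OF witness i] F
    by (simp add: fcoprod_singleton)
qed

definition orbit_of :: "nat \<Rightarrow> nat \<times> nat" where
  "orbit_of n = (SOME (i, l). i < length S \<and> l < length (Ts!i) \<and> n = block_pos (map length Ts) i l)"

lemma orbit_of:
  assumes n: "n < length (fcoprod T S Ts)" and il: "orbit_of n = (i, l)"
  shows "i < length S" "l < length (Ts!i)" "n = block_pos (map length Ts) i l"
proof -
  have "n < sum_list (map length Ts)" using n length_fcoprod[OF length_Ts, of T] by simp
  then obtain i' l' where i': "i' < length (map length Ts)" "l' < map length Ts ! i'"
      "n = block_pos (map length Ts) i' l'"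
    using block_pos_surj by blast
  let ?P = "\<lambda>(i, l). i < length S \<and> l < length (Ts!i) \<and> n = block_pos (map length Ts) i l"
  have "?P (i', l')" using i' length_Ts by simp
  then have "?P (orbit_of n)" unfolding orbit_of_def by (rule someI)
  then show "i < length S" "l < length (Ts!i)" "n = block_pos (map length Ts) i l" using il by simp_all
qed

lemma coproduct_witness:
  "join_witness C F' (fcoprod T A Ys) (fcoprod T S Ts)
    (\<lambda>n. idx (fst (orbit_of n)) (snd (orbit_of n))) (\<lambda>n. map_at (fst (orbit_of n)) (snd (orbit_of n)))"
  unfolding join_witness_def
proof (intro allI impI)
  fix n assume n: "n < length (fcoprod T S Ts)"
  obtain i l where il: "orbit_of n = (i, l)" by fastforce
  note i = orbit_of[OF n il]
  have Rn: "fcoprod T S Ts ! n = Comp T (S!i) (Ts!i!l)" using nth_fcoprod[OF length_Ts i(1,2)] i(3) by simp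
  have "Dom T (fcoprod T S Ts ! n) = Dom T (Ts!i!l)"
    using Rn comp_hom[OF fVobj_hom[OF Ts[OF i(1)] i(2)] fVobj_hom[OF S i(1)]] by (simp add: hom_def)
  moreover have "n2 = n"
    if "Dom T (A!\<pi> i) \<notin> F'" "Dom T (fcoprod T A Ys ! idx i l) \<notin> F'"
      "n2 < length (fcoprod T S Ts)" "idx (fst (orbit_of n2)) (snd (orbit_of n2)) = idx i l" for n2
  proof -
    obtain i2 l2 where il2: "orbit_of n2 = (i2, l2)" by fastforce
    note i2 = orbit_of[OF that(3) il2]
    then have "i2 = i \<and> l2 = l" using orbit_outside[OF i(1,2) that(1)] that(2,4) il2 by auto
    then show ?thesis using i(3) i2(3) by simp
  qed
  moreover have "idx i l < length (fcoprod T A Ys)"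
    using idx_outside(1)[OF i(1,2)] idx_inside(1)[OF i(1)] by blast
  ultimately show "idx (fst (orbit_of n)) (snd (orbit_of n)) < length (fcoprod T A Ys) \<and>
    hom (map_at (fst (orbit_of n)) (snd (orbit_of n))) (Dom T (fcoprod T S Ts ! n))
      (Dom T (fcoprod T A Ys ! idx (fst (orbit_of n)) (snd (orbit_of n)))) \<and>
    Comp T (fcoprod T A Ys ! idx (fst (orbit_of n)) (snd (orbit_of n)))
      (map_at (fst (orbit_of n)) (snd (orbit_of n))) = fcoprod T S Ts ! n \<and>
    [map_at (fst (orbit_of n)) (snd (orbit_of n))]
      \<in> C (Dom T (fcoprod T A Ys ! idx (fst (orbit_of n)) (snd (orbit_of n)))) \<and>
    (Dom T (fcoprod T A Ys ! idx (fst (orbit_of n)) (snd (orbit_of n))) \<notin> F' \<longrightarrow>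
      iso (map_at (fst (orbit_of n)) (snd (orbit_of n))) \<and>
      (\<forall>n2<length (fcoprod T S Ts).
        idx (fst (orbit_of n2)) (snd (orbit_of n2)) = idx (fst (orbit_of n)) (snd (orbit_of n)) \<longrightarrow> n2 = n))"
    using orbit_outside[OF i(1,2)] orbit_inside[OF i(1,2)] il Rn
    by (cases "Dom T (A!\<pi> i) \<in> F'") auto
qed

end

context category
begin

lemma join_EF_fcoprod_closed:
  assumes u: "uni_wIndSys T C" and S: "S \<in> join_EF C F' V" and l: "length Ts = length S"
    and Ts: "\<And>i. i < length S \<Longrightarrow> Ts!i \<in> join_EF C F' (Dom T (S!i))"
  shows "fcoprod T S Ts \<in> join_EF C F' V"
proof -
  obtain A \<pi> x where SV: "fVobj T V S" and A: "A \<in> C V" and w: "join_witness C F' A S \<pi> x"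
    using S unfolding join_EF_iff by blast
  have "\<forall>i. \<exists>B \<rho> y. i < length S \<longrightarrow> fVobj T (Dom T (S!i)) (Ts!i) \<and> B \<in> C (Dom T (S!i)) \<and>
      join_witness C F' B (Ts!i) \<rho> y"
    using Ts unfolding join_EF_iff by blast
  then obtain B \<rho> y where Bw: "\<And>i. i < length S \<Longrightarrow> fVobj T (Dom T (S!i)) (Ts!i) \<and>
      B i \<in> C (Dom T (S!i)) \<and> join_witness C F' (B i) (Ts!i) (\<rho> i) (y i)"
    by metis
  interpret join_coproduct T C F' V S A Ts \<pi> x B \<rho> y
    using u SV A w l Bw by unfold_locales blast+
  show ?thesis
    unfolding join_EF_iff using coproduct_witness base_mem fVobj_fcoprod[OF SV l] Bw by blast
qed

end

context atomic_orbital_category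
begin

lemma uni_wIndSys_join_EF:
  assumes u: "uni_wIndSys T C" and F': "is_family T F'"
  shows "uni_wIndSys T (join_EF C F')"
proof -
  have "full_tsubcat T (join_EF C F')"
    unfolding full_tsubcat_def
  proof (intro conjI ballI allI impI)
    fix V assume "V \<notin> Obj T"
    then show "join_EF C F' V = {}" unfolding join_EF_def using fVobj_obj by blast
  next
    fix V S S' assume "S \<in> join_EF C F' V" "fVobj T V S' \<and> fV_iso T S S'"
    then show "S' \<in> join_EF C F' V" using join_EF_iso_closed[OF u] by blast
  next
    fix g S P assume "g \<in> Arr T" "S \<in> join_EF C F' (Cod T g)" "fVobj T (Dom T g) P \<and> is_restriction T g S P"
    then show "P \<in> join_EF C F' (Dom T g)" using join_EF_restriction_closed[OF u F'] by blast
  qed (auto simp: join_EF_iff)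
  moreover have "[Idt T V] \<in> join_EF C F' V" if "V \<in> Obj T" for V
    using le_join_EF[OF u] uni_wIndSys_terminal[OF u that] by (auto simp: le_fun_def)
  moreover have "fcoprod T S Ts \<in> join_EF C F' V"
    if "S \<in> join_EF C F' V" "length Ts = length S \<and> (\<forall>i<length S. Ts!i \<in> join_EF C F' (Dom T (S!i)))"
    for V S Ts
    using join_EF_fcoprod_closed[OF u] that by blast
  ultimately show ?thesis
    unfolding uni_wIndSys_def wIndSys_def using join_EF_appendD by blast
qed

lemma wjoin_eq_join_EF:
  assumes u: "uni_wIndSys T C" and F': "is_family T F'"
  shows "wjoin T C (EFinf T F') = join_EF C F'"
proof
  fix V
  show "wjoin T C (EFinf T F') V = join_EF C F' V"
  proof
    show "wjoin T C (EFinf T F') V \<subseteq> join_EF C F' V"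
      unfolding wjoin_def
      using uni_wIndSys_wIndSys[OF uni_wIndSys_join_EF[OF u F']] le_join_EF[OF u] EFinf_le_join_EF[OF u]
      by blast
    show "join_EF C F' V \<subseteq> wjoin T C (EFinf T F') V"
      unfolding wjoin_def using join_EF_le[OF u] by (auto simp: le_fun_def)
  qed
qed

lemma EFinf_le_nabla_ladj: "EFinf T F \<le> nabla_ladj T F"
  unfolding nabla_ladj_def by (auto simp: le_fun_def)

lemma join_EF_le_iff:
  assumes u: "uni_wIndSys T C" and F': "is_family T F'" and D: "uni_wIndSys T D" "F' \<subseteq> nabla_u T D"
  shows "join_EF C F' \<le> D \<longleftrightarrow> C \<le> D"
proof
  assume "C \<le> D"
  moreover have "EFinf T F' \<le> D"
    using order_trans[OF EFinf_le_nabla_ladj] nabla_ladj_le_iff[OF F' D(1)] D(2) by blast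
  ultimately show "join_EF C F' \<le> D" using join_EF_le[OF u uni_wIndSys_wIndSys[OF D(1)]] by blast
qed (use le_join_EF[OF u] in \<open>rule order_trans\<close>)

lemma nabla_u_join_EF:
  assumes u: "uni_wIndSys T C" and F': "is_family T F'" and le: "nabla_u T C \<subseteq> F'"
  shows "nabla_u T (join_EF C F') = F'"
proof
  have "C \<le> nabla_radj F'" using nabla_u_le_iff_le_nabla_radj[OF u F'] le by blast
  moreover have "nabla_ladj T F' \<le> nabla_radj F'"
    using nabla_u_le_iff_le_nabla_radj[OF uni_wIndSys_nabla_ladj[OF F'] F'] nabla_u_nabla_ladj[OF F'] by blast
  ultimately have "join_EF C F' \<le> nabla_radj F'"
    using join_EF_le[OF u uni_wIndSys_wIndSys[OF uni_wIndSys_nabla_radj]] EFinf_le_nabla_ladj order_trans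
    by blast
  then show "nabla_u T (join_EF C F') \<subseteq> F'"
    using nabla_u_mono nabla_u_nabla_radj[OF F'] by blast
next
  have "F' \<subseteq> nabla_u T (EFinf T F')"
    using F' replicate_id_mem_EFinf unfolding nabla_u_def is_family_def by auto
  then show "F' \<subseteq> nabla_u T (join_EF C F')"
    using nabla_u_mono[OF EFinf_le_join_EF[OF u]] by blast
qed

end

theorem mainTheorem18:
  fixes T :: "('o, 'm) cat"
  assumes "is_category T" and "atomic T" and "orbital T"
  shows
    "(\<forall>\<C>. uni_wIndSys T \<C> \<longrightarrow> is_family T (nabla_u T \<C>)) \<and>
     (\<forall>\<F>. is_family T \<F> \<longrightarrow> uni_wIndSys T (\<lambda>V. F0 T V \<union> EFinf T \<F> V)) \<and>
     (\<forall>\<F> \<C>. is_family T \<F> \<and> uni_wIndSys T \<C> \<longrightarrow>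
        ((\<lambda>V. F0 T V \<union> EFinf T \<F> V) \<le> \<C> \<longleftrightarrow> \<F> \<subseteq> nabla_u T \<C>)) \<and>
     (\<forall>\<F> \<F>'. is_family T \<F> \<and> is_family T \<F>' \<longrightarrow>
        ((\<lambda>V. F0 T V \<union> EFinf T \<F> V) \<le> (\<lambda>V. F0 T V \<union> EFinf T \<F>' V) \<longleftrightarrow> \<F> \<subseteq> \<F>')) \<and>
     (\<exists>R. (\<forall>\<F>. is_family T \<F> \<longrightarrow> uni_wIndSys T (R \<F>)) \<and>
          (\<forall>\<C> \<F>. uni_wIndSys T \<C> \<and> is_family T \<F> \<longrightarrow> (nabla_u T \<C> \<subseteq> \<F> \<longleftrightarrow> \<C> \<le> R \<F>)) \<and>
          (\<forall>\<F> \<F>'. is_family T \<F> \<and> is_family T \<F>' \<longrightarrow> (R \<F> \<le> R \<F>' \<longleftrightarrow> \<F> \<subseteq> \<F>'))) \<and>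
     (\<forall>\<F> \<F>' \<C>. is_family T \<F> \<and> is_family T \<F>' \<and> \<F> \<subseteq> \<F>' \<and>
        uni_wIndSys T \<C> \<and> nabla_u T \<C> = \<F> \<longrightarrow>
        uni_wIndSys T (wjoin T \<C> (EFinf T \<F>')) \<and>
        nabla_u T (wjoin T \<C> (EFinf T \<F>')) = \<F>' \<and>
        (\<forall>\<D>. uni_wIndSys T \<D> \<and> \<F>' \<subseteq> nabla_u T \<D> \<longrightarrow>
           (\<C> \<le> \<D> \<longleftrightarrow> wjoin T \<C> (EFinf T \<F>') \<le> \<D>)))"
proof -
  interpret atomic_orbital_category T
    using assms by unfold_locales auto
  show ?thesis
    unfolding nabla_ladj_def[symmetric]
  proof (intro conjI allI impI; (elim conjE)?)
    show "\<exists>R. (\<forall>\<F>. is_family T \<F> \<longrightarrow> uni_wIndSys T (R \<F>)) \<and>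
      (\<forall>\<C> \<F>. uni_wIndSys T \<C> \<and> is_family T \<F> \<longrightarrow> (nabla_u T \<C> \<subseteq> \<F> \<longleftrightarrow> \<C> \<le> R \<F>)) \<and>
      (\<forall>\<F> \<F>'. is_family T \<F> \<and> is_family T \<F>' \<longrightarrow> (R \<F> \<le> R \<F>' \<longleftrightarrow> \<F> \<subseteq> \<F>'))"
      using uni_wIndSys_nabla_radj nabla_u_le_iff_le_nabla_radj nabla_radj_le_nabla_radj_iff
      by (intro exI[of _ nabla_radj]) blast
  qed (simp_all add: family_nabla_u uni_wIndSys_nabla_ladj nabla_ladj_le_iff nabla_u_nabla_ladj
      wjoin_eq_join_EF uni_wIndSys_join_EF nabla_u_join_EF join_EF_le_iff)
qed


end
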